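(* Let $A=\bigoplus_{j=1}^k M_{n_j}(\mathbb{C})$ and $B=\bigoplus_{j=1}^l M_{m_j}(\mathbb{C})$, and let $\phi:A\to B$ be an injective unital *-homomorphism. If $\phi$ is an $L_{\min}$-embedding, then $\operatorname{mult}_\phi(M_{n_j}(\mathbb{C}))=1$ for each $j=1,\dots,k$.
   Context: For a unital C*-algebra $D$, $\rho_{\min}^D(x)=\inf\{\|x-p\|: p\in D \text{ a minimal projection}\}$, where a minimal projection is a nonzero $p=p^2=p^*$ such that any projection $q$ with $qp=q$ satisfies $q=0$ or $q=p$. $L_{\min}$ is the language of unital C*-algebras with an extra unary predicate $P_{\min}$ interpreted in each algebra $D$ as $\rho_{\min}^D$; an $L_{\min}$-embedding is an injective unital *-homomorphism $\phi$ with $\rho_{\min}^B(\phi(a))=\rho_{\min}^A(a)$ for all $a\in A$. For an embedding $\phi:A\to B$, $E_\phi(n_i,m_j)$ denotes the multiplicity with which $\phi$ embeds the summand $M_{n_i}(\mathbb{C})$ of $A$ into the summand $M_{m_j}(\mathbb{C})$ of $B$ (i.e. the partial map $M_{n_i}(\mathbb{C})\to M_{m_j}(\mathbb{C})$ obtained by restricting and projecting is unitarily conjugate to $x\mapsto x\otimes 1_{E_\phi(n_i,m_j)}$ plus zero), and $\operatorname{mult}_\phi(M_{n_i}(\mathbb{C}))=\sum_{j=1}^l E_\phi(n_i,m_j)$. *)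

theory Defs
  imports "HOL-Analysis.Analysis" "Jordan_Normal_Form.Matrix"
begin

definition cadj :: "complex mat \<Rightarrow> complex mat" where
  "cadj A = mat (dim_col A) (dim_row A) (\<lambda>(i,j). cnj (A $$ (j,i)))"

definition vnorm :: "complex vec \<Rightarrow> real" where
  "vnorm v = sqrt (\<Sum>i<dim_vec v. (cmod (v $ i))^2)"

definition opnorm :: "complex mat \<Rightarrow> real" where
  "opnorm A = Sup {vnorm (A *\<^sub>v v) | v. v \<in> carrier_vec (dim_col A) \<and> vnorm v \<le> 1}"

definition unitary_mat :: "nat \<Rightarrow> complex mat \<Rightarrow> bool" where
  "unitary_mat m U \<longleftrightarrow> U \<in> carrier_mat m m \<and> cadj U * U = 1\<^sub>m m \<and> U * cadj U = 1\<^sub>m m"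

section \<open>The C*-algebra M_{n_1}(C) (+) ... (+) M_{n_k}(C), given by the list ns = [n_1,...,n_k]\<close>

definition bcarrier :: "nat list \<Rightarrow> complex mat list set" where
  "bcarrier ns = {xs. length xs = length ns \<and> (\<forall>j<length ns. xs ! j \<in> carrier_mat (ns ! j) (ns ! j))}"

definition bzero :: "nat list \<Rightarrow> complex mat list" where
  "bzero ns = map (\<lambda>n. 0\<^sub>m n n) ns"

definition bone :: "nat list \<Rightarrow> complex mat list" where
  "bone ns = map (\<lambda>n. 1\<^sub>m n) ns"

definition badd :: "complex mat list \<Rightarrow> complex mat list \<Rightarrow> complex mat list" where
  "badd xs ys = map2 (+) xs ys"

definition bsub :: "complex mat list \<Rightarrow> complex mat list \<Rightarrow> complex mat list" where
  "bsub xs ys = map2 (-) xs ys"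

definition bsmult :: "complex \<Rightarrow> complex mat list \<Rightarrow> complex mat list" where
  "bsmult c xs = map (\<lambda>x. c \<cdot>\<^sub>m x) xs"

definition bmult :: "complex mat list \<Rightarrow> complex mat list \<Rightarrow> complex mat list" where
  "bmult xs ys = map2 (*) xs ys"

definition badj :: "complex mat list \<Rightarrow> complex mat list" where
  "badj xs = map cadj xs"

definition bnorm :: "complex mat list \<Rightarrow> real" where
  "bnorm xs = Max (insert 0 (opnorm ` set xs))"

definition is_proj :: "nat list \<Rightarrow> complex mat list \<Rightarrow> bool" where
  "is_proj ns p \<longleftrightarrow> p \<in> bcarrier ns \<and> bmult p p = p \<and> badj p = p"

definition min_proj :: "nat list \<Rightarrow> complex mat list \<Rightarrow> bool" where
  "min_proj ns p \<longleftrightarrow> is_proj ns p \<and> p \<noteq> bzero ns \<and>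
     (\<forall>q. is_proj ns q \<and> bmult q p = q \<longrightarrow> q = bzero ns \<or> q = p)"

definition rho_min :: "nat list \<Rightarrow> complex mat list \<Rightarrow> real" where
  "rho_min ns x = Inf {bnorm (bsub x p) | p. min_proj ns p}"

definition star_hom :: "nat list \<Rightarrow> nat list \<Rightarrow> (complex mat list \<Rightarrow> complex mat list) \<Rightarrow> bool" where
  "star_hom ns ms \<phi> \<longleftrightarrow>
     (\<forall>x\<in>bcarrier ns. \<phi> x \<in> bcarrier ms) \<and>
     (\<forall>x\<in>bcarrier ns. \<forall>y\<in>bcarrier ns. \<phi> (badd x y) = badd (\<phi> x) (\<phi> y)) \<and>
     (\<forall>c. \<forall>x\<in>bcarrier ns. \<phi> (bsmult c x) = bsmult c (\<phi> x)) \<and>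
     (\<forall>x\<in>bcarrier ns. \<forall>y\<in>bcarrier ns. \<phi> (bmult x y) = bmult (\<phi> x) (\<phi> y)) \<and>
     (\<forall>x\<in>bcarrier ns. \<phi> (badj x) = badj (\<phi> x))"

definition unital_inj_star_hom :: "nat list \<Rightarrow> nat list \<Rightarrow> (complex mat list \<Rightarrow> complex mat list) \<Rightarrow> bool" where
  "unital_inj_star_hom ns ms \<phi> \<longleftrightarrow>
     star_hom ns ms \<phi> \<and> \<phi> (bone ns) = bone ms \<and> inj_on \<phi> (bcarrier ns)"

definition Lmin_embedding :: "nat list \<Rightarrow> nat list \<Rightarrow> (complex mat list \<Rightarrow> complex mat list) \<Rightarrow> bool" where
  "Lmin_embedding ns ms \<phi> \<longleftrightarrow>
     unital_inj_star_hom ns ms \<phi> \<and> (\<forall>a\<in>bcarrier ns. rho_min ms (\<phi> a) = rho_min ns a)"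

definition binc :: "nat list \<Rightarrow> nat \<Rightarrow> complex mat \<Rightarrow> complex mat list" where
  "binc ns i x = map (\<lambda>j. if j = i then x else 0\<^sub>m (ns ! j) (ns ! j)) [0..<length ns]"

text \<open>The m x m matrix (x \<otimes> 1_E) \<oplus> 0, for x an n x n matrix (requires n*E \<le> m);
  the row index a*E+b corresponds to the pair (a,b).\<close>
definition tensor_pad :: "nat \<Rightarrow> nat \<Rightarrow> nat \<Rightarrow> complex mat \<Rightarrow> complex mat" where
  "tensor_pad n E m x = mat m m (\<lambda>(r,s).
     if r < n * E \<and> s < n * E \<and> r mod E = s mod E then x $$ (r div E, s div E) else 0)"

definition Emult :: "nat list \<Rightarrow> nat list \<Rightarrow> (complex mat list \<Rightarrow> complex mat list) \<Rightarrow> nat \<Rightarrow> nat \<Rightarrow> nat" where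
  "Emult ns ms \<phi> i j = (THE E. ns ! i * E \<le> ms ! j \<and>
     (\<exists>U. unitary_mat (ms ! j) U \<and>
       (\<forall>x\<in>carrier_mat (ns ! i) (ns ! i).
          (\<phi> (binc ns i x)) ! j = U * tensor_pad (ns ! i) E (ms ! j) x * cadj U)))"

definition mult :: "nat list \<Rightarrow> nat list \<Rightarrow> (complex mat list \<Rightarrow> complex mat list) \<Rightarrow> nat \<Rightarrow> nat" where
  "mult ns ms \<phi> i = (\<Sum>j<length ms. Emult ns ms \<phi> i j)"

end

(* The matrix unit p = e_00 of the i-th summand of A is a minimal projection, so rho_min p = 0
   and, phi being an L_min-embedding, phi p lies at distance < 1 from a minimal projection q of B.
   Such a q is a rank-one projection v v^* in a single summand j0. By the structure theorem for
   *-representations of a full matrix algebra, the j-th component of phi p is unitarily conjugate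
   to e_00 (x) 1_E with E = E_phi(n_i, m_j), a projection of rank E. A difference of two
   projections has norm at least 1 as soon as some unit vector is fixed by one of them and killed
   by the other; this forces E = 0 for j <> j0 and E = 1 for j = j0, so the multiplicities of the
   i-th summand add up to 1. *)

theory Submission
  imports Defs "Jordan_Normal_Form.Determinant"
begin

no_notation Finite_Cartesian_Product.vec.vec_nth (infixl "$" 90)

section \<open>Vectors, adjoints and norms\<close>

lemma index_mult_mat_vec_sum:
  assumes "A \<in> carrier_mat m k" "v \<in> carrier_vec k" "i < m"
  shows "(A *\<^sub>v v) $ i = (\<Sum>j<k. A $$ (i,j) * v $ j)"
  using assms by (auto simp: scalar_prod_def lessThan_atLeast0 intro!: sum.cong)

lemma mult_mat_zero_vec [simp]: "A \<in> carrier_mat m k \<Longrightarrow> A *\<^sub>v 0\<^sub>v k = 0\<^sub>v m"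
  by (rule eq_vecI) (auto simp: scalar_prod_def)

lemma zero_mult_mat_vec [simp]: "w \<in> carrier_vec k \<Longrightarrow> 0\<^sub>m m k *\<^sub>v w = 0\<^sub>v m"
  by (rule eq_vecI) (auto simp: scalar_prod_def)

lemma smult_mult_mat_vec:
  "A \<in> carrier_mat m k \<Longrightarrow> w \<in> carrier_vec k \<Longrightarrow> (c \<cdot>\<^sub>m A) *\<^sub>v w = c \<cdot>\<^sub>v (A *\<^sub>v w)"
  by (rule eq_vecI) (auto simp: scalar_prod_def sum_distrib_left ac_simps)

lemma smult_vec_zero [simp]: "c \<cdot>\<^sub>v 0\<^sub>v m = (0\<^sub>v m :: 'a :: semiring_0 vec)"
  by (rule eq_vecI) auto

lemma zero_smult_vec: "v \<in> carrier_vec m \<Longrightarrow> 0 \<cdot>\<^sub>v v = (0\<^sub>v m :: 'a :: semiring_0 vec)"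
  by (rule eq_vecI) auto

lemma minus_eq_0_vec_imp_eq:
  fixes u v :: "complex vec"
  assumes "u \<in> carrier_vec m" "v \<in> carrier_vec m" "u - v = 0\<^sub>v m"
  shows "u = v"
proof (rule eq_vecI)
  fix i assume "i < dim_vec v"
  then have "u $ i - v $ i = 0" using arg_cong[OF assms(3), of "\<lambda>w. w $ i"] assms(1,2) by simp
  then show "u $ i = v $ i" by simp
qed (use assms in simp)

lemma assoc_mult3_mat_vec:
  assumes "A \<in> carrier_mat m m" "B \<in> carrier_mat m m" "C \<in> carrier_mat m m" "w \<in> carrier_vec m"
  shows "(A * B * C) *\<^sub>v w = A *\<^sub>v (B *\<^sub>v (C *\<^sub>v w))"
proof -
  have "(A * B * C) *\<^sub>v w = (A * B) *\<^sub>v (C *\<^sub>v w)"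
    by (rule assoc_mult_mat_vec[of _ m m _ m]) (use assms in auto)
  then show ?thesis using assms by simp
qed

lemma cadj_carrier [simp]: "A \<in> carrier_mat m k \<Longrightarrow> cadj A \<in> carrier_mat k m"
  by (auto simp: cadj_def)

lemma cadj_dims [simp]: "dim_row (cadj A) = dim_col A" "dim_col (cadj A) = dim_row A"
  by (auto simp: cadj_def)

lemma cadj_index [simp]:
  "i < dim_col A \<Longrightarrow> j < dim_row A \<Longrightarrow> cadj A $$ (i,j) = cnj (A $$ (j,i))"
  by (auto simp: cadj_def)

lemma cadj_cadj [simp]: "cadj (cadj A) = A"
  by (auto simp: cadj_def intro!: eq_matI)

lemma cadj_one [simp]: "cadj (1\<^sub>m m) = 1\<^sub>m m"
  by (auto simp: cadj_def intro!: eq_matI)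

lemma cadj_mult:
  "A \<in> carrier_mat m k \<Longrightarrow> B \<in> carrier_mat k l \<Longrightarrow> cadj (A * B) = cadj B * cadj A"
  by (auto simp: cadj_def scalar_prod_def mult.commute intro!: eq_matI sum.cong)

lemma cscalar_prod_sum:
  "u \<in> carrier_vec m \<Longrightarrow> w \<in> carrier_vec m \<Longrightarrow> u \<bullet>c w = (\<Sum>i<m. u $ i * cnj (w $ i))"
  by (auto simp: scalar_prod_def lessThan_atLeast0)

lemma cscalar_prod_swap:
  "u \<in> carrier_vec m \<Longrightarrow> w \<in> carrier_vec m \<Longrightarrow> w \<bullet>c u = cnj (u \<bullet>c w)"
  by (simp add: cscalar_prod_sum[of _ m] mult.commute)

lemma cscalar_prod_smult_right:
  "u \<in> carrier_vec m \<Longrightarrow> w \<in> carrier_vec m \<Longrightarrow> u \<bullet>c (c \<cdot>\<^sub>v w) = cnj c * (u \<bullet>c w)"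
  by (simp add: conjugate_smult_vec)

lemma cscalar_prod_minus_left:
  "u \<in> carrier_vec m \<Longrightarrow> v \<in> carrier_vec m \<Longrightarrow> w \<in> carrier_vec m \<Longrightarrow>
    (u - v) \<bullet>c w = u \<bullet>c w - v \<bullet>c w"
  by (rule minus_scalar_prod_distrib) auto

lemma cscalar_prod_adjoint:
  assumes A: "A \<in> carrier_mat m k" and v: "v \<in> carrier_vec k" and w: "w \<in> carrier_vec m"
  shows "(A *\<^sub>v v) \<bullet>c w = v \<bullet>c (cadj A *\<^sub>v w)"
proof -
  have "(A *\<^sub>v v) \<bullet>c w = (\<Sum>i<m. \<Sum>j<k. A $$ (i,j) * v $ j * cnj (w $ i))"
    using assms by (simp add: cscalar_prod_sum[of _ m] index_mult_mat_vec_sum sum_distrib_right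
        del: index_mult_mat_vec)
  also have "\<dots> = (\<Sum>j<k. \<Sum>i<m. A $$ (i,j) * v $ j * cnj (w $ i))"
    by (rule sum.swap)
  also have "\<dots> = (\<Sum>j<k. v $ j * cnj ((cadj A *\<^sub>v w) $ j))"
  proof (rule sum.cong)
    fix j assume "j \<in> {..<k}"
    then have "(cadj A *\<^sub>v w) $ j = (\<Sum>i<m. cnj (A $$ (i,j)) * w $ i)"
      using A by (subst index_mult_mat_vec_sum[OF cadj_carrier[OF A] w]) auto
    then show "(\<Sum>i<m. A $$ (i,j) * v $ j * cnj (w $ i)) = v $ j * cnj ((cadj A *\<^sub>v w) $ j)"
      by (simp add: sum_distrib_left ac_simps)
  qed simp
  also have "\<dots> = v \<bullet>c (cadj A *\<^sub>v w)"
    by (rule cscalar_prod_sum[symmetric]) (use v mult_mat_vec_carrier[OF cadj_carrier[OF A] w] in auto)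
  finally show ?thesis .
qed

lemma cscalar_prod_adjoint_right:
  assumes "A \<in> carrier_mat m k" "v \<in> carrier_vec m" "w \<in> carrier_vec k"
  shows "v \<bullet>c (A *\<^sub>v w) = (cadj A *\<^sub>v v) \<bullet>c w"
  using cscalar_prod_adjoint[of "cadj A" k m v w] assms by simp

lemma vnorm_zero [simp]: "vnorm (0\<^sub>v k) = 0"
  by (simp add: vnorm_def)

lemma vnorm_uminus: "vnorm (- w) = vnorm w"
  unfolding vnorm_def by (auto intro!: arg_cong[where f = sqrt] sum.cong)

lemma cscalar_prod_self: "v \<bullet>c v = complex_of_real ((vnorm v)\<^sup>2)"
proof -
  have "v \<bullet>c v = (\<Sum>i<dim_vec v. complex_of_real ((cmod (v $ i))\<^sup>2))"
    by (simp add: cscalar_prod_sum[of _ "dim_vec v"] complex_norm_square del: of_real_power)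
  also have "\<dots> = complex_of_real ((vnorm v)\<^sup>2)"
    unfolding vnorm_def by (simp add: sum_nonneg)
  finally show ?thesis .
qed

lemma vnorm_eq_1_iff: "vnorm v = 1 \<longleftrightarrow> v \<bullet>c v = 1"
proof -
  have "vnorm v \<ge> 0" unfolding vnorm_def by (simp add: sum_nonneg)
  then have "vnorm v = 1 \<longleftrightarrow> (vnorm v)\<^sup>2 = 1" by (simp add: power2_eq_1_iff)
  then show ?thesis unfolding cscalar_prod_self by (metis of_real_eq_1_iff)
qed

lemma exists_normalizing_scalar:
  fixes y :: "complex vec"
  assumes "y \<in> carrier_vec m" "y \<noteq> 0\<^sub>v m"
  obtains c where "(c \<cdot>\<^sub>v y) \<bullet>c (c \<cdot>\<^sub>v y) = 1"
proof
  have "vnorm y \<noteq> 0" using assms cscalar_prod_self[of y] by auto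
  moreover have "(c \<cdot>\<^sub>v y) \<bullet>c (c \<cdot>\<^sub>v y) = c * cnj c * (y \<bullet>c y)" for c
    using assms by (simp add: cscalar_prod_smult_right[of _ m])
  ultimately show "(complex_of_real (1 / vnorm y) \<cdot>\<^sub>v y) \<bullet>c (complex_of_real (1 / vnorm y) \<cdot>\<^sub>v y) = 1"
    by (simp add: cscalar_prod_self power2_eq_square flip: of_real_mult)
qed

lemma vnorm_mult_le_opnorm:
  assumes A: "A \<in> carrier_mat m k" and w: "w \<in> carrier_vec k" "vnorm w \<le> 1"
  shows "vnorm (A *\<^sub>v w) \<le> opnorm A"
proof -
  define M where "M = (\<Sum>i<m. \<Sum>j<k. cmod (A $$ (i,j)))"
  have bound: "vnorm (A *\<^sub>v v) \<le> sqrt (real m * M\<^sup>2)" if v: "v \<in> carrier_vec k" "vnorm v \<le> 1" for v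
  proof -
    have entry: "cmod (v $ j) \<le> 1" if "j < k" for j
    proof -
      have "(cmod (v $ j))\<^sup>2 \<le> (\<Sum>i<dim_vec v. (cmod (v $ i))\<^sup>2)"
        by (rule member_le_sum) (use that v in auto)
      then have "sqrt ((cmod (v $ j))\<^sup>2) \<le> vnorm v" unfolding vnorm_def by (rule real_sqrt_le_mono)
      then show ?thesis using v by simp
    qed
    have "cmod ((A *\<^sub>v v) $ i) \<le> M" if i: "i < m" for i
    proof -
      have "cmod ((A *\<^sub>v v) $ i) \<le> (\<Sum>j<k. cmod (A $$ (i,j) * v $ j))"
        unfolding index_mult_mat_vec_sum[OF A v(1) i] by (rule norm_sum)
      also have "\<dots> \<le> (\<Sum>j<k. cmod (A $$ (i,j)))"
        by (rule sum_mono) (auto simp: norm_mult intro!: mult_left_le entry)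
      also have "\<dots> \<le> M" unfolding M_def
        by (rule member_le_sum[where f = "\<lambda>i. \<Sum>j<k. cmod (A $$ (i,j))"]) (use i in \<open>auto intro: sum_nonneg\<close>)
      finally show ?thesis .
    qed
    then have "(\<Sum>i<m. (cmod ((A *\<^sub>v v) $ i))\<^sup>2) \<le> (\<Sum>i<m. M\<^sup>2)"
      by (intro sum_mono power_mono) auto
    then show ?thesis using A unfolding vnorm_def by (simp add: real_sqrt_le_mono)
  qed
  have "vnorm (A *\<^sub>v w) \<le> Sup {vnorm (A *\<^sub>v v) | v. v \<in> carrier_vec (dim_col A) \<and> vnorm v \<le> 1}"
    by (rule cSup_upper) (use A w bound in \<open>auto simp: bdd_above_def\<close>)
  then show ?thesis unfolding opnorm_def .
qed

lemma one_le_opnorm: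
  assumes "A \<in> carrier_mat m m" "w \<in> carrier_vec m" "w \<bullet>c w = 1" "vnorm (A *\<^sub>v w) = 1"
  shows "1 \<le> opnorm A"
proof -
  have "vnorm w = 1" using assms(3) vnorm_eq_1_iff by simp
  then show ?thesis using vnorm_mult_le_opnorm[of A m m w] assms(1,2,4) by simp
qed

lemma one_le_opnorm_diff:
  assumes P: "P \<in> carrier_mat m m" and Q: "Q \<in> carrier_mat m m" and w: "w \<in> carrier_vec m" "w \<bullet>c w = 1"
    and Pw: "P *\<^sub>v w - Q *\<^sub>v w = w \<or> P *\<^sub>v w - Q *\<^sub>v w = - w"
  shows "1 \<le> opnorm (P - Q)"
proof (rule one_le_opnorm[OF _ w])
  show "P - Q \<in> carrier_mat m m" by (rule minus_carrier_mat[OF Q])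
  have "(P - Q) *\<^sub>v w = P *\<^sub>v w - Q *\<^sub>v w" by (rule minus_mult_distrib_mat_vec[OF P Q w(1)])
  moreover have "vnorm w = 1" using w(2) vnorm_eq_1_iff by simp
  ultimately show "vnorm ((P - Q) *\<^sub>v w) = 1"
    using Pw vnorm_uminus[of w] by auto
qed

lemma opnorm_zero: "opnorm (0\<^sub>m a b) = 0"
proof -
  have "{vnorm (0\<^sub>m a b *\<^sub>v v) | v. v \<in> carrier_vec (dim_col (0\<^sub>m a b)) \<and> vnorm v \<le> 1} = {0}"
  proof
    show "{0} \<subseteq> {vnorm (0\<^sub>m a b *\<^sub>v v) | v. v \<in> carrier_vec (dim_col (0\<^sub>m a b)) \<and> vnorm v \<le> 1}"
      by (auto simp: vnorm_zero intro!: exI[of _ "0\<^sub>v b"])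
  qed (auto simp: vnorm_zero)
  then show ?thesis unfolding opnorm_def by simp
qed

section \<open>Orthonormal lists and unitary matrices\<close>

definition orthonormal :: "nat \<Rightarrow> complex vec list \<Rightarrow> bool" where
  "orthonormal m L \<longleftrightarrow> set L \<subseteq> carrier_vec m \<and>
     (\<forall>i<length L. \<forall>j<length L. L ! i \<bullet>c L ! j = (if i = j then 1 else 0))"

lemma orthonormal_snoc:
  assumes L: "orthonormal m L" and y: "y \<in> carrier_vec m" "y \<bullet>c y = 1"
    and perp: "\<And>l. l \<in> set L \<Longrightarrow> y \<bullet>c l = 0"
  shows "orthonormal m (L @ [y])"
proof -
  have "l \<bullet>c y = 0" if "l \<in> set L" for l
    using perp[OF that] cscalar_prod_swap[of y m l] L that y unfolding orthonormal_def by auto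
  then show ?thesis using L y perp unfolding orthonormal_def by (auto simp: nth_append less_Suc_eq)
qed

lemma mat_of_cols_conj_index:
  assumes L: "set L \<subseteq> carrier_vec m" and A: "A \<in> carrier_mat m m"
    and st: "s < length L" "t < length L"
  shows "(cadj (mat_of_cols m L) * A * mat_of_cols m L) $$ (s,t) = (A *\<^sub>v L ! t) \<bullet>c L ! s"
proof -
  let ?U = "mat_of_cols m L"
  have Ls: "L ! s \<in> carrier_vec m" and Lt: "L ! t \<in> carrier_vec m" using L st by auto
  have "cadj ?U * A * ?U = cadj ?U * (A * ?U)"
    by (rule assoc_mult_mat[of _ "length L" m _ m _ "length L"]) (use A in auto)
  then have "(cadj ?U * A * ?U) $$ (s,t) = row (cadj ?U) s \<bullet> col (A * ?U) t"
    using st A by simp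
  also have "col (A * ?U) t = A *\<^sub>v col ?U t"
    by (rule col_mult2) (use A st in auto)
  also have "col ?U t = L ! t" using st Lt by (simp add: col_mat_of_cols)
  also have "row (cadj ?U) s = conjugate (L ! s)"
    using st Ls by (auto simp: cadj_def mat_of_cols_def)
  finally show ?thesis
    using A Ls Lt comm_scalar_prod[of "conjugate (L ! s)" m "A *\<^sub>v L ! t"] by simp
qed

lemma unitary_mat_of_cols:
  assumes L: "orthonormal m L" "length L = m"
  shows "unitary_mat m (mat_of_cols m L)"
proof -
  let ?U = "mat_of_cols m L"
  have U: "?U \<in> carrier_mat m m" and U': "cadj ?U \<in> carrier_mat m m" using L(2) by auto
  have Lc: "set L \<subseteq> carrier_vec m" using L(1) unfolding orthonormal_def by simp
  have "cadj ?U * ?U = 1\<^sub>m m"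
  proof (rule eq_matI)
    fix s t assume "s < dim_row (1\<^sub>m m)" "t < dim_col (1\<^sub>m m)"
    then have st: "s < length L" "t < length L" using L(2) by simp_all
    have "(cadj ?U * ?U) $$ (s,t) = (cadj ?U * 1\<^sub>m m * ?U) $$ (s,t)" using U' by simp
    also have "\<dots> = (1\<^sub>m m *\<^sub>v L ! t) \<bullet>c L ! s"
      by (rule mat_of_cols_conj_index[OF Lc one_carrier_mat st])
    also have "\<dots> = L ! t \<bullet>c L ! s" using subsetD[OF Lc nth_mem[OF st(2)]] by simp
    also have "\<dots> = 1\<^sub>m m $$ (s,t)" using L st unfolding orthonormal_def by auto
    finally show "(cadj ?U * ?U) $$ (s,t) = 1\<^sub>m m $$ (s,t)" .
  qed (use U L(2) in simp_all)
  moreover from this have "?U * cadj ?U = 1\<^sub>m m"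
    by (rule mat_mult_left_right_inverse[OF U' U])
  ultimately show ?thesis unfolding unitary_mat_def using U by simp
qed

lemma unitary_mult_cadj_vec:
  assumes "unitary_mat m U" "y \<in> carrier_vec m"
  shows "U *\<^sub>v (cadj U *\<^sub>v y) = y"
proof -
  have U: "U \<in> carrier_mat m m" "U * cadj U = 1\<^sub>m m" using assms(1) unfolding unitary_mat_def by auto
  have "U *\<^sub>v (cadj U *\<^sub>v y) = (U * cadj U) *\<^sub>v y"
    by (rule assoc_mult_mat_vec[symmetric, of _ m m _ m]) (use U assms(2) in auto)
  then show ?thesis using U assms(2) by simp
qed

lemma unitary_conj_eq:
  assumes U: "unitary_mat m U" and A: "A \<in> carrier_mat m m" and T: "cadj U * A * U = T"
  shows "A = U * T * cadj U"
proof -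
  have Uc: "U \<in> carrier_mat m m" "cadj U \<in> carrier_mat m m" and UU: "U * cadj U = 1\<^sub>m m"
    using U unfolding unitary_mat_def by auto
  have sq [simp]: "X * Y \<in> carrier_mat m m" if "X \<in> carrier_mat m m" "Y \<in> carrier_mat m m" for X Y
    using that by (rule mult_carrier_mat)
  have "U * T * cadj U = (U * cadj U) * A * (U * cadj U)"
    unfolding T[symmetric] using Uc A by (simp add: assoc_mult_mat[of _ m m _ m _ m])
  then show ?thesis using UU A by simp
qed

lemma index_cadj_mat_of_cols_mult_vec:
  assumes "set L \<subseteq> carrier_vec m" "y \<in> carrier_vec m" "s < length L"
  shows "(cadj (mat_of_cols m L) *\<^sub>v y) $ s = y \<bullet>c L ! s"
  using assms carrier_vecD[OF subsetD[OF assms(1) nth_mem[OF assms(3)]]]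
  by (auto simp: cadj_def mat_of_cols_def scalar_prod_def mult.commute intro!: sum.cong)

lemma orthonormal_length_le:
  assumes L: "orthonormal m L"
  shows "length L \<le> m"
proof (rule ccontr)
  assume "\<not> length L \<le> m"
  then have m: "m < length L" by simp
  let ?V = "mat_of_cols m (take m L)"
  have Lc: "set L \<subseteq> carrier_vec m" and Lip: "\<And>i j. i < length L \<Longrightarrow> j < length L \<Longrightarrow>
      L ! i \<bullet>c L ! j = (if i = j then 1 else 0)"
    using L unfolding orthonormal_def by auto
  then have "orthonormal m (take m L)"
    unfolding orthonormal_def by (auto dest: in_set_takeD)
  then have V: "unitary_mat m ?V" using m by (intro unitary_mat_of_cols) auto
  have y: "L ! m \<in> carrier_vec m" using Lc m by auto
  have "cadj ?V *\<^sub>v L ! m = 0\<^sub>v m"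
  proof (rule eq_vecI)
    fix s assume "s < dim_vec (0\<^sub>v m)"
    then show "(cadj ?V *\<^sub>v L ! m) $ s = 0\<^sub>v m $ s"
      using index_cadj_mat_of_cols_mult_vec[of "take m L" m "L ! m" s] Lc y m Lip[of m s]
      by (auto dest: in_set_takeD)
  qed (use m in simp)
  then have "L ! m = ?V *\<^sub>v 0\<^sub>v m" using unitary_mult_cadj_vec[OF V y] by simp
  also have "\<dots> = 0\<^sub>v m" using V unfolding unitary_mat_def by simp
  finally show False using Lip[of m m] m by simp
qed

lemma exists_orthogonal_nonzero:
  fixes L :: "complex vec list"
  assumes L: "set L \<subseteq> carrier_vec m" and k: "length L < m"
  obtains u where "u \<in> carrier_vec m" "u \<noteq> 0\<^sub>v m" "\<And>l. l \<in> set L \<Longrightarrow> u \<bullet>c l = 0"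
proof -
  define M where "M = mat m m (\<lambda>(i,j). if i < length L then cnj (L ! i $ j) else (0::complex))"
  have M: "M \<in> carrier_mat m m" unfolding M_def by simp
  have "M = mat\<^sub>r m m (\<lambda>i. if i = length L then 0\<^sub>v m else row M i)"
    by (rule eq_matI) (auto simp: M_def)
  also have "det \<dots> = 0"
    by (rule det_row_0) (use k M in auto)
  finally have "det M = 0" .
  then obtain u where u: "u \<in> carrier_vec m" "u \<noteq> 0\<^sub>v m" "M *\<^sub>v u = 0\<^sub>v m"
    using det_0_iff_vec_prod_zero_field[OF M] by blast
  have "u \<bullet>c l = 0" if "l \<in> set L" for l
  proof -
    obtain i where i: "i < length L" "l = L ! i" using \<open>l \<in> set L\<close> by (auto simp: in_set_conv_nth)
    have "(M *\<^sub>v u) $ i = u \<bullet>c l"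
      using i k u(1) carrier_vecD[OF subsetD[OF L nth_mem[OF i(1)]]]
      by (auto simp: M_def scalar_prod_def mult.commute intro!: sum.cong)
    then show ?thesis using u(3) i k by simp
  qed
  with u that show ?thesis by blast
qed

lemma orthonormal_length_eq:
  assumes "orthonormal m L"
    and "\<And>u. u \<in> carrier_vec m \<Longrightarrow> (\<forall>l\<in>set L. u \<bullet>c l = 0) \<Longrightarrow> u = 0\<^sub>v m"
  shows "length L = m"
proof (rule ccontr)
  assume "length L \<noteq> m"
  then have "length L < m" using orthonormal_length_le[OF assms(1)] by simp
  moreover have "set L \<subseteq> carrier_vec m" using assms(1) unfolding orthonormal_def by simp
  ultimately obtain u where "u \<in> carrier_vec m" "u \<noteq> 0\<^sub>v m" "\<And>l. l \<in> set L \<Longrightarrow> u \<bullet>c l = 0"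
    using exists_orthogonal_nonzero[of L m] by blast
  then show False using assms(2) by blast
qed

lemma orthonormal_maximal_extension:
  assumes C: "orthonormal m C" and P: "\<And>c y. y \<in> carrier_vec m \<Longrightarrow> P y \<Longrightarrow> P (c \<cdot>\<^sub>v y)"
  shows "\<exists>Z. orthonormal m (C @ Z) \<and> (\<forall>z\<in>set Z. P z) \<and>
    (\<forall>y\<in>carrier_vec m. P y \<longrightarrow> (\<forall>l\<in>set (C @ Z). y \<bullet>c l = 0) \<longrightarrow> y = 0\<^sub>v m)"
proof -
  let ?S = "{Z. orthonormal m (C @ Z) \<and> (\<forall>z\<in>set Z. P z)}"
  have "\<exists>Z. Z \<in> ?S \<and> (\<forall>Z'. Z' \<in> ?S \<longrightarrow> length Z' \<le> length Z)"
    by (rule ex_has_greatest_nat[of "\<lambda>Z. Z \<in> ?S" "[]" length "Suc m"])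
      (use C in \<open>auto simp: less_Suc_eq_le dest!: orthonormal_length_le\<close>)
  then obtain Z where Z: "orthonormal m (C @ Z)" "\<forall>z\<in>set Z. P z"
    and longest: "\<And>Z'. orthonormal m (C @ Z') \<Longrightarrow> \<forall>z\<in>set Z'. P z \<Longrightarrow> length Z' \<le> length Z"
    by blast
  have "y = 0\<^sub>v m" if y: "y \<in> carrier_vec m" "P y" and perp: "\<forall>l\<in>set (C @ Z). y \<bullet>c l = 0" for y
  proof (rule ccontr)
    assume "y \<noteq> 0\<^sub>v m"
    then obtain c where c: "(c \<cdot>\<^sub>v y) \<bullet>c (c \<cdot>\<^sub>v y) = 1"
      using exists_normalizing_scalar y(1) by blast
    have "l \<in> set (C @ Z) \<Longrightarrow> (c \<cdot>\<^sub>v y) \<bullet>c l = 0" for l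
      using perp Z(1) y(1) by (auto simp: orthonormal_def)
    then have "orthonormal m ((C @ Z) @ [c \<cdot>\<^sub>v y])"
      using Z(1) y(1) c by (intro orthonormal_snoc) auto
    moreover have "\<forall>z\<in>set (Z @ [c \<cdot>\<^sub>v y]). P z" using Z(2) P y by auto
    ultimately have "length (Z @ [c \<cdot>\<^sub>v y]) \<le> length Z" using longest[of "Z @ [c \<cdot>\<^sub>v y]"] by simp
    then show False by simp
  qed
  with Z show ?thesis by blast
qed

section \<open>*-Representations of a full matrix algebra\<close>

definition matrix_unit :: "nat \<Rightarrow> nat \<Rightarrow> nat \<Rightarrow> complex mat" where
  "matrix_unit n a b = mat n n (\<lambda>(r,s). if r = a \<and> s = b then 1 else 0)"

lemma matrix_unit_carrier [simp]: "matrix_unit n a b \<in> carrier_mat n n"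
  by (simp add: matrix_unit_def)

lemma matrix_unit_dims [simp]: "dim_row (matrix_unit n a b) = n" "dim_col (matrix_unit n a b) = n"
  by (simp_all add: matrix_unit_def)

lemma cadj_matrix_unit [simp]: "cadj (matrix_unit n a b) = matrix_unit n b a"
  by (auto simp: cadj_def matrix_unit_def intro!: eq_matI)

lemma matrix_unit_mult:
  assumes "b < n" "c < n"
  shows "matrix_unit n a b * matrix_unit n c d = (if b = c then matrix_unit n a d else 0\<^sub>m n n)"
proof (rule eq_matI)
  fix r s assume "r < dim_row (if b = c then matrix_unit n a d else 0\<^sub>m n n)"
    "s < dim_col (if b = c then matrix_unit n a d else 0\<^sub>m n n)"
  then have rs: "r < n" "s < n" by (auto split: if_splits)
  have "(matrix_unit n a b * matrix_unit n c d) $$ (r,s) =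
      (\<Sum>k<n. (if r = a \<and> k = b then 1 else 0) * (if k = c \<and> s = d then 1 else 0))"
    using rs by (auto simp: matrix_unit_def scalar_prod_def lessThan_atLeast0 intro!: sum.cong)
  also have "\<dots> = (\<Sum>k<n. if k = b then (if r = a \<and> b = c \<and> s = d then 1 else 0) else 0)"
    by (rule sum.cong) auto
  finally show "(matrix_unit n a b * matrix_unit n c d) $$ (r,s) =
      (if b = c then matrix_unit n a d else 0\<^sub>m n n) $$ (r,s)"
    using rs assms by (auto simp: matrix_unit_def)
qed auto

lemma matrix_unit_sandwich:
  assumes x: "x \<in> carrier_mat n n" and a: "a < n" and b: "b < n"
  shows "matrix_unit n c b * x * matrix_unit n a d = x $$ (b,a) \<cdot>\<^sub>m matrix_unit n c d"
proof (rule eq_matI)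
  fix r s assume "r < dim_row (x $$ (b,a) \<cdot>\<^sub>m matrix_unit n c d)"
    "s < dim_col (x $$ (b,a) \<cdot>\<^sub>m matrix_unit n c d)"
  then have rs: "r < n" "s < n" by auto
  have left: "(matrix_unit n c b * x) $$ (r,l) = (if r = c then x $$ (b,l) else 0)" if "l < n" for l
  proof -
    have "(matrix_unit n c b * x) $$ (r,l) = (\<Sum>k<n. (if r = c \<and> k = b then 1 else 0) * x $$ (k,l))"
      using rs that x by (auto simp: matrix_unit_def scalar_prod_def lessThan_atLeast0 intro!: sum.cong)
    also have "\<dots> = (\<Sum>k<n. if k = b then (if r = c then x $$ (b,l) else 0) else 0)"
      by (rule sum.cong) auto
    finally show ?thesis using b by simp
  qed
  have "(matrix_unit n c b * x * matrix_unit n a d) $$ (r,s) =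
      (\<Sum>l<n. (matrix_unit n c b * x) $$ (r,l) * (if l = a \<and> s = d then 1 else 0))"
    using rs x by (auto simp: matrix_unit_def scalar_prod_def lessThan_atLeast0 intro!: sum.cong)
  also have "\<dots> = (\<Sum>l<n. if l = a then (if r = c \<and> s = d then x $$ (b,a) else 0) else 0)"
    by (rule sum.cong) (auto simp: left)
  finally show "(matrix_unit n c b * x * matrix_unit n a d) $$ (r,s) =
      (x $$ (b,a) \<cdot>\<^sub>m matrix_unit n c d) $$ (r,s)"
    using rs a by (auto simp: matrix_unit_def)
qed (use x in auto)

lemma tensor_pad_carrier [simp]: "tensor_pad n E m x \<in> carrier_mat m m"
  by (simp add: tensor_pad_def)

locale star_rep =
  fixes n m :: nat and \<pi> :: "complex mat \<Rightarrow> complex mat"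
  assumes hom_carrier: "x \<in> carrier_mat n n \<Longrightarrow> \<pi> x \<in> carrier_mat m m"
    and hom_add: "x \<in> carrier_mat n n \<Longrightarrow> y \<in> carrier_mat n n \<Longrightarrow> \<pi> (x + y) = \<pi> x + \<pi> y"
    and hom_smult: "x \<in> carrier_mat n n \<Longrightarrow> \<pi> (c \<cdot>\<^sub>m x) = c \<cdot>\<^sub>m \<pi> x"
    and hom_mult: "x \<in> carrier_mat n n \<Longrightarrow> y \<in> carrier_mat n n \<Longrightarrow> \<pi> (x * y) = \<pi> x * \<pi> y"
    and hom_adj: "x \<in> carrier_mat n n \<Longrightarrow> \<pi> (cadj x) = cadj (\<pi> x)"
begin

lemma unit_carrier [simp]: "\<pi> (matrix_unit n a b) \<in> carrier_mat m m"
  by (simp add: hom_carrier)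

lemma one_carrier [simp]: "\<pi> (1\<^sub>m n) \<in> carrier_mat m m"
  by (simp add: hom_carrier)

lemma hom_zero: "\<pi> (0\<^sub>m n n) = 0\<^sub>m m m"
proof -
  have "\<pi> (0\<^sub>m n n) = 0 \<cdot>\<^sub>m \<pi> (0\<^sub>m n n)" using hom_smult[of "0\<^sub>m n n" 0] by simp
  also have "\<dots> = 0\<^sub>m m m" using hom_carrier[of "0\<^sub>m n n"] by (auto intro!: eq_matI)
  finally show ?thesis .
qed

lemma unit_mult:
  "b < n \<Longrightarrow> c < n \<Longrightarrow>
    \<pi> (matrix_unit n a b) * \<pi> (matrix_unit n c d) = (if b = c then \<pi> (matrix_unit n a d) else 0\<^sub>m m m)"
  using hom_mult[of "matrix_unit n a b" "matrix_unit n c d", symmetric]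
  by (cases "b = c") (simp_all add: matrix_unit_mult hom_zero)

lemma unit_adj: "cadj (\<pi> (matrix_unit n a b)) = \<pi> (matrix_unit n b a)"
  using hom_adj[of "matrix_unit n a b"] by simp

lemma one_adj: "cadj (\<pi> (1\<^sub>m n)) = \<pi> (1\<^sub>m n)"
  using hom_adj[of "1\<^sub>m n"] by simp

lemma one_mult: "x \<in> carrier_mat n n \<Longrightarrow> \<pi> (1\<^sub>m n) * \<pi> x = \<pi> x"
  using hom_mult[of "1\<^sub>m n" x] by simp

lemma mult_one: "x \<in> carrier_mat n n \<Longrightarrow> \<pi> x * \<pi> (1\<^sub>m n) = \<pi> x"
  using hom_mult[of x "1\<^sub>m n"] by simp

lemma unit_sandwich:
  assumes "x \<in> carrier_mat n n" "a < n" "b < n"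
  shows "\<pi> (matrix_unit n 0 b) * \<pi> x * \<pi> (matrix_unit n a 0) = x $$ (b,a) \<cdot>\<^sub>m \<pi> (matrix_unit n 0 0)"
proof -
  have "\<pi> (matrix_unit n 0 b * x * matrix_unit n a 0) = \<pi> (matrix_unit n 0 b * x) * \<pi> (matrix_unit n a 0)"
    using assms mult_carrier_mat[OF matrix_unit_carrier assms(1)] by (simp add: hom_mult)
  then have "\<pi> (matrix_unit n 0 b) * \<pi> x * \<pi> (matrix_unit n a 0) = \<pi> (matrix_unit n 0 b * x * matrix_unit n a 0)"
    using assms by (simp add: hom_mult)
  also have "\<dots> = x $$ (b,a) \<cdot>\<^sub>m \<pi> (matrix_unit n 0 0)"
    using assms by (simp add: matrix_unit_sandwich hom_smult)
  finally show ?thesis .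
qed

lemma one_mult_vec_eq_0:
  assumes u: "u \<in> carrier_vec m" and units: "\<And>a. a < n \<Longrightarrow> \<pi> (matrix_unit n a a) *\<^sub>v u = 0\<^sub>v m"
  shows "\<pi> (1\<^sub>m n) *\<^sub>v u = 0\<^sub>v m"
proof -
  let ?D = "\<lambda>k. mat n n (\<lambda>(r,s). if r = s \<and> r < k then 1 else 0 :: complex)"
  have "\<pi> (?D k) *\<^sub>v u = 0\<^sub>v m" if "k \<le> n" for k
    using that
  proof (induction k)
    case 0
    have "?D 0 = 0\<^sub>m n n" by (rule eq_matI) auto
    then have "\<pi> (?D 0) = 0\<^sub>m m m" by (simp only: hom_zero)
    then show ?case unfolding \<open>\<pi> (?D 0) = 0\<^sub>m m m\<close> using u by simp
  next
    case (Suc k)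
    have "?D (Suc k) = ?D k + matrix_unit n k k"
      by (rule eq_matI) (auto simp: matrix_unit_def)
    then have "\<pi> (?D (Suc k)) = \<pi> (?D k) + \<pi> (matrix_unit n k k)"
      by (simp add: hom_add)
    then show ?case
      using Suc u units[of k] hom_carrier[of "?D k"] by (simp add: add_mult_distrib_mat_vec[of _ m m])
  qed
  moreover have "?D n = 1\<^sub>m n" by (rule eq_matI) auto
  ultimately show ?thesis by force
qed

lemma hom_mult_vec_eq_0:
  assumes "x \<in> carrier_mat n n" "z \<in> carrier_vec m" "\<pi> (1\<^sub>m n) *\<^sub>v z = 0\<^sub>v m"
  shows "\<pi> x *\<^sub>v z = 0\<^sub>v m"
proof -
  have "\<pi> x *\<^sub>v z = (\<pi> x * \<pi> (1\<^sub>m n)) *\<^sub>v z" using mult_one[OF assms(1)] by simp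
  also have "\<dots> = \<pi> x *\<^sub>v (\<pi> (1\<^sub>m n) *\<^sub>v z)"
    by (rule assoc_mult_mat_vec[OF hom_carrier[OF assms(1)] one_carrier assms(2)])
  also have "\<dots> = 0\<^sub>v m" using assms(3) hom_carrier[OF assms(1)] by simp
  finally show ?thesis .
qed


lemma cscalar_prod_one_kernel:
  assumes x: "x \<in> carrier_mat n n" and y: "y \<in> carrier_vec m" and z: "z \<in> carrier_vec m"
    and ker: "\<pi> (1\<^sub>m n) *\<^sub>v y = 0\<^sub>v m \<or> \<pi> (1\<^sub>m n) *\<^sub>v z = 0\<^sub>v m"
  shows "(\<pi> x *\<^sub>v y) \<bullet>c z = 0"
proof (cases "\<pi> (1\<^sub>m n) *\<^sub>v y = 0\<^sub>v m")
  case True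
  then show ?thesis using hom_mult_vec_eq_0[OF x y] z by simp
next
  case False
  then have "\<pi> (cadj x) *\<^sub>v z = 0\<^sub>v m" using ker hom_mult_vec_eq_0[of "cadj x" z] x z by simp
  moreover have "(\<pi> x *\<^sub>v y) \<bullet>c z = y \<bullet>c (\<pi> (cadj x) *\<^sub>v z)"
    using cscalar_prod_adjoint[OF hom_carrier[OF x] y z] hom_adj[OF x] by simp
  ultimately show ?thesis using y by simp
qed
end

text \<open>\<open>W\<close> is an orthonormal basis of the range of \<open>\<pi> e\<^sub>0\<^sub>0\<close>. The vectors
  \<open>\<pi> e\<^sub>a\<^sub>0 w\<^sub>k\<close>, indexed by \<open>t = a |W| + k\<close>, span the range of \<open>\<pi> 1\<close>, on which
  \<open>\<pi>\<close> acts as \<open>x \<otimes> 1\<^bsub>|W|\<^esub>\<close>.\<close>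

locale star_rep_frame = star_rep +
  fixes W :: "complex vec list"
  assumes W_orthonormal: "orthonormal m W"
    and W_fixed: "\<And>w. w \<in> set W \<Longrightarrow> \<pi> (matrix_unit n 0 0) *\<^sub>v w = w"
    and W_maximal: "\<And>y. y \<in> carrier_vec m \<Longrightarrow> \<pi> (matrix_unit n 0 0) *\<^sub>v y = y \<Longrightarrow>
      (\<forall>w\<in>set W. y \<bullet>c w = 0) \<Longrightarrow> y = 0\<^sub>v m"
begin

definition frame_vec :: "nat \<Rightarrow> complex vec" where
  "frame_vec t = \<pi> (matrix_unit n (t div length W) 0) *\<^sub>v W ! (t mod length W)"

definition frame :: "complex vec list" where
  "frame = map frame_vec [0..<n * length W]"

lemma W_carrier: "k < length W \<Longrightarrow> W ! k \<in> carrier_vec m"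
  using W_orthonormal unfolding orthonormal_def by auto

lemma frame_index_less:
  assumes "t < n * length W"
  shows "t div length W < n" "t mod length W < length W"
proof -
  show "t div length W < n" using assms by (simp add: less_mult_imp_div_less)
  show "t mod length W < length W" using assms by (cases "length W = 0") auto
qed

lemma frame_vec_pair:
  assumes "a < n" "k < length W"
  shows "a * length W + k < n * length W" "frame_vec (a * length W + k) = \<pi> (matrix_unit n a 0) *\<^sub>v W ! k"
proof -
  have "a * length W + k < (a + 1) * length W" using assms(2) by simp
  also have "\<dots> \<le> n * length W" using assms(1) by (intro mult_right_mono) auto
  finally show "a * length W + k < n * length W" .
  have "length W \<noteq> 0" using assms(2) by linarith
  then show "frame_vec (a * length W + k) = \<pi> (matrix_unit n a 0) *\<^sub>v W ! k"
    using assms(2) by (simp add: frame_vec_def)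
qed

lemma frame_vec_carrier: "t < n * length W \<Longrightarrow> frame_vec t \<in> carrier_vec m"
  unfolding frame_vec_def using frame_index_less W_carrier by (meson mult_mat_vec_carrier unit_carrier)

lemma frame_vec_cscalar:
  assumes x: "x \<in> carrier_mat n n" and s: "s < n * length W" and t: "t < n * length W"
  shows "(\<pi> x *\<^sub>v frame_vec t) \<bullet>c frame_vec s =
    (if s mod length W = t mod length W then x $$ (s div length W, t div length W) else 0)"
proof -
  define a k b l where "a = t div length W" "k = t mod length W" "b = s div length W" "l = s mod length W"
  have ab: "a < n" "b < n" and kl: "k < length W" "l < length W"
    using frame_index_less[OF s] frame_index_less[OF t] unfolding a_k_b_l_def by auto
  have Wk: "W ! k \<in> carrier_vec m" and Wl: "W ! l \<in> carrier_vec m" using W_carrier kl by auto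
  have "(\<pi> x *\<^sub>v frame_vec t) \<bullet>c frame_vec s =
      (\<pi> x *\<^sub>v (\<pi> (matrix_unit n a 0) *\<^sub>v W ! k)) \<bullet>c (\<pi> (matrix_unit n b 0) *\<^sub>v W ! l)"
    unfolding frame_vec_def a_k_b_l_def ..
  also have "\<dots> = (cadj (\<pi> (matrix_unit n b 0)) *\<^sub>v (\<pi> x *\<^sub>v (\<pi> (matrix_unit n a 0) *\<^sub>v W ! k))) \<bullet>c W ! l"
    using x Wk by (intro cscalar_prod_adjoint_right[OF unit_carrier _ Wl]) (meson hom_carrier mult_mat_vec_carrier unit_carrier)
  also have "cadj (\<pi> (matrix_unit n b 0)) *\<^sub>v (\<pi> x *\<^sub>v (\<pi> (matrix_unit n a 0) *\<^sub>v W ! k)) =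
      (\<pi> (matrix_unit n 0 b) * \<pi> x * \<pi> (matrix_unit n a 0)) *\<^sub>v W ! k"
    using assoc_mult3_mat_vec[OF unit_carrier hom_carrier[OF x] unit_carrier Wk] by (simp add: unit_adj)
  also have "\<pi> (matrix_unit n 0 b) * \<pi> x * \<pi> (matrix_unit n a 0) = x $$ (b,a) \<cdot>\<^sub>m \<pi> (matrix_unit n 0 0)"
    by (rule unit_sandwich[OF x ab])
  also have "(x $$ (b,a) \<cdot>\<^sub>m \<pi> (matrix_unit n 0 0)) *\<^sub>v W ! k = x $$ (b,a) \<cdot>\<^sub>v W ! k"
    using Wk W_fixed kl by (simp add: smult_mult_mat_vec[of _ m m])
  also have "(x $$ (b,a) \<cdot>\<^sub>v W ! k) \<bullet>c W ! l = x $$ (b,a) * (W ! k \<bullet>c W ! l)"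
    using Wk Wl by simp
  finally show ?thesis
    using W_orthonormal kl unfolding orthonormal_def a_k_b_l_def by auto
qed

lemma frame_vec_fixed:
  assumes "t < n * length W"
  shows "\<pi> (1\<^sub>m n) *\<^sub>v frame_vec t = frame_vec t"
proof -
  have "\<pi> (1\<^sub>m n) *\<^sub>v frame_vec t =
      (\<pi> (1\<^sub>m n) * \<pi> (matrix_unit n (t div length W) 0)) *\<^sub>v W ! (t mod length W)"
    unfolding frame_vec_def
    by (rule assoc_mult_mat_vec[symmetric, OF one_carrier unit_carrier W_carrier[OF frame_index_less(2)[OF assms]]])
  then show ?thesis unfolding frame_vec_def by (simp add: one_mult)
qed

lemma frame_orthonormal: "orthonormal m frame"
proof -
  have "(\<pi> (1\<^sub>m n) *\<^sub>v frame_vec t) \<bullet>c frame_vec s = (if s = t then 1 else 0)"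
    if "s < n * length W" "t < n * length W" for s t
  proof -
    have "s = t \<longleftrightarrow> s div length W = t div length W \<and> s mod length W = t mod length W"
      by (metis div_mult_mod_eq)
    then show ?thesis
      using frame_vec_cscalar[OF one_carrier_mat that] frame_index_less[OF that(1)] frame_index_less[OF that(2)]
      by auto
  qed
  then show ?thesis
    unfolding orthonormal_def frame_def using frame_vec_carrier frame_vec_fixed by auto
qed

lemma frame_orthogonal_range_eq_0:
  assumes y: "y \<in> carrier_vec m" "\<pi> (1\<^sub>m n) *\<^sub>v y = y" and perp: "\<forall>l\<in>set frame. y \<bullet>c l = 0"
  shows "y = 0\<^sub>v m"
proof -
  have "\<pi> (matrix_unit n a a) *\<^sub>v y = 0\<^sub>v m" if a: "a < n" for a
  proof -
    let ?g = "\<pi> (matrix_unit n 0 a) *\<^sub>v y"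
    have g: "?g \<in> carrier_vec m" by (rule mult_mat_vec_carrier[OF unit_carrier y(1)])
    have "\<pi> (matrix_unit n 0 0) *\<^sub>v ?g = (\<pi> (matrix_unit n 0 0) * \<pi> (matrix_unit n 0 a)) *\<^sub>v y"
      by (rule assoc_mult_mat_vec[symmetric, OF unit_carrier unit_carrier y(1)])
    also have "\<dots> = ?g" using unit_mult[of 0 0 0 a] a by simp
    finally have "\<pi> (matrix_unit n 0 0) *\<^sub>v ?g = ?g" .
    moreover have "?g \<bullet>c w = 0" if "w \<in> set W" for w
    proof -
      obtain k where k: "k < length W" "w = W ! k" using \<open>w \<in> set W\<close> by (auto simp: in_set_conv_nth)
      have "?g \<bullet>c w = y \<bullet>c (\<pi> (matrix_unit n a 0) *\<^sub>v W ! k)"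
        using cscalar_prod_adjoint[of "\<pi> (matrix_unit n 0 a)" m m y "W ! k"] y W_carrier k
        by (simp add: unit_adj)
      also have "\<dots> = y \<bullet>c frame_vec (a * length W + k)"
        using frame_vec_pair[OF a k(1)] by simp
      finally show ?thesis using perp frame_vec_pair(1)[OF a k(1)] unfolding frame_def by auto
    qed
    ultimately have "?g = 0\<^sub>v m" using W_maximal g by blast
    then have "(\<pi> (matrix_unit n a 0) * \<pi> (matrix_unit n 0 a)) *\<^sub>v y = 0\<^sub>v m"
      using assoc_mult_mat_vec[OF unit_carrier unit_carrier y(1)] by simp
    then show ?thesis using unit_mult[of 0 0 a a] a by simp
  qed
  then have "\<pi> (1\<^sub>m n) *\<^sub>v y = 0\<^sub>v m" by (rule one_mult_vec_eq_0[OF y(1)])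
  with y show ?thesis by simp
qed

lemma frame_extension_length:
  assumes Z: "orthonormal m (frame @ Z)" "\<forall>z\<in>set Z. \<pi> (1\<^sub>m n) *\<^sub>v z = 0\<^sub>v m"
    and Z_max: "\<forall>y\<in>carrier_vec m. \<pi> (1\<^sub>m n) *\<^sub>v y = 0\<^sub>v m \<longrightarrow>
      (\<forall>l\<in>set (frame @ Z). y \<bullet>c l = 0) \<longrightarrow> y = 0\<^sub>v m"
  shows "length (frame @ Z) = m"
proof (rule orthonormal_length_eq[OF Z(1)])
  fix u assume u: "u \<in> carrier_vec m" and perp: "\<forall>l\<in>set (frame @ Z). u \<bullet>c l = 0"
  have Lc: "set (frame @ Z) \<subseteq> carrier_vec m" using Z(1) unfolding orthonormal_def by simp
  let ?y = "u - \<pi> (1\<^sub>m n) *\<^sub>v u"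
  have Pu: "\<pi> (1\<^sub>m n) *\<^sub>v u \<in> carrier_vec m" by (rule mult_mat_vec_carrier[OF one_carrier u])
  have "\<pi> (1\<^sub>m n) *\<^sub>v ?y = \<pi> (1\<^sub>m n) *\<^sub>v u - \<pi> (1\<^sub>m n) *\<^sub>v (\<pi> (1\<^sub>m n) *\<^sub>v u)"
    by (rule mult_minus_distrib_mat_vec[OF one_carrier u Pu])
  also have "\<pi> (1\<^sub>m n) *\<^sub>v (\<pi> (1\<^sub>m n) *\<^sub>v u) = \<pi> (1\<^sub>m n) *\<^sub>v u"
    using assoc_mult_mat_vec[OF one_carrier one_carrier u] one_mult[OF one_carrier_mat] by simp
  finally have "\<pi> (1\<^sub>m n) *\<^sub>v ?y = 0\<^sub>v m" using Pu by simp
  moreover have "?y \<bullet>c l = 0" if l: "l \<in> set (frame @ Z)" for l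
  proof -
    have lc: "l \<in> carrier_vec m" using l Lc by auto
    have "\<pi> (1\<^sub>m n) *\<^sub>v l = l \<or> \<pi> (1\<^sub>m n) *\<^sub>v l = 0\<^sub>v m"
      using l Z(2) frame_vec_fixed by (auto simp: frame_def)
    then have "(\<pi> (1\<^sub>m n) *\<^sub>v u) \<bullet>c l = 0"
      using cscalar_prod_adjoint[OF one_carrier u lc] one_adj perp l lc u by auto
    then show ?thesis using perp l u Pu lc by (simp add: cscalar_prod_minus_left[of _ m])
  qed
  ultimately have "?y = 0\<^sub>v m" using Z_max u Pu by simp
  then have "\<pi> (1\<^sub>m n) *\<^sub>v u = u" using minus_eq_0_vec_imp_eq[OF u Pu] by simp
  then show "u = 0\<^sub>v m" using frame_orthogonal_range_eq_0 u perp by simp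
qed

lemma frame_conj_tensor_pad:
  assumes L: "orthonormal m (frame @ Z)" "length (frame @ Z) = m"
    and Z: "\<And>z. z \<in> set Z \<Longrightarrow> \<pi> (1\<^sub>m n) *\<^sub>v z = 0\<^sub>v m"
    and x: "x \<in> carrier_mat n n"
  shows "cadj (mat_of_cols m (frame @ Z)) * \<pi> x * mat_of_cols m (frame @ Z) = tensor_pad n (length W) m x"
proof (rule eq_matI)
  let ?L = "frame @ Z"
  fix s t assume "s < dim_row (tensor_pad n (length W) m x)" "t < dim_col (tensor_pad n (length W) m x)"
  then have st: "s < m" "t < m" by (simp_all add: tensor_pad_def)
  have Lc: "set ?L \<subseteq> carrier_vec m" using L(1) unfolding orthonormal_def by simp
  then have Lst: "?L ! s \<in> carrier_vec m" "?L ! t \<in> carrier_vec m"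
    using st L(2) nth_mem[of s ?L] nth_mem[of t ?L] by auto
  have in_Z: "?L ! r \<in> set Z" if "n * length W \<le> r" "r < m" for r
    using that L(2) by (simp add: frame_def nth_append)
  have "(cadj (mat_of_cols m ?L) * \<pi> x * mat_of_cols m ?L) $$ (s,t) = (\<pi> x *\<^sub>v ?L ! t) \<bullet>c ?L ! s"
    by (rule mat_of_cols_conj_index[OF Lc hom_carrier[OF x]]) (use st L(2) in simp_all)
  also have "\<dots> = tensor_pad n (length W) m x $$ (s,t)"
  proof (cases "t < n * length W \<and> s < n * length W")
    case True
    then have "?L ! t = frame_vec t" "?L ! s = frame_vec s" by (simp_all add: frame_def nth_append)
    moreover have "tensor_pad n (length W) m x $$ (s,t) =
        (if s mod length W = t mod length W then x $$ (s div length W, t div length W) else 0)"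
      using True st by (simp add: tensor_pad_def)
    ultimately show ?thesis using frame_vec_cscalar[OF x] True by simp
  next
    case outside: False
    then have "\<pi> (1\<^sub>m n) *\<^sub>v ?L ! t = 0\<^sub>v m \<or> \<pi> (1\<^sub>m n) *\<^sub>v ?L ! s = 0\<^sub>v m"
      using st Z in_Z by (meson not_le)
    then have "(\<pi> x *\<^sub>v ?L ! t) \<bullet>c ?L ! s = 0" by (rule cscalar_prod_one_kernel[OF x Lst(2,1)])
    then show ?thesis using outside st by (auto simp: tensor_pad_def)
  qed
  finally show "(cadj (mat_of_cols m ?L) * \<pi> x * mat_of_cols m ?L) $$ (s,t) = tensor_pad n (length W) m x $$ (s,t)" .
qed (use L(2) in \<open>simp_all add: tensor_pad_def\<close>)

end

theorem (in star_rep) tensor_pad_form: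
  assumes "0 < n"
  shows "\<exists>E U. n * E \<le> m \<and> unitary_mat m U \<and>
    (\<forall>x\<in>carrier_mat n n. \<pi> x = U * tensor_pad n E m x * cadj U)"
proof -
  let ?F = "\<pi> (matrix_unit n 0 0)" and ?P = "\<pi> (1\<^sub>m n)"
  have "\<exists>W. orthonormal m ([] @ W) \<and> (\<forall>w\<in>set W. ?F *\<^sub>v w = w) \<and>
      (\<forall>y\<in>carrier_vec m. ?F *\<^sub>v y = y \<longrightarrow> (\<forall>l\<in>set ([] @ W). y \<bullet>c l = 0) \<longrightarrow> y = 0\<^sub>v m)"
    by (rule orthonormal_maximal_extension) (simp_all add: orthonormal_def mult_mat_vec[of _ m m])
  then obtain W where W: "orthonormal m W" "\<forall>w\<in>set W. ?F *\<^sub>v w = w"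
    and W_max: "\<forall>y\<in>carrier_vec m. ?F *\<^sub>v y = y \<longrightarrow> (\<forall>l\<in>set W. y \<bullet>c l = 0) \<longrightarrow> y = 0\<^sub>v m"
    unfolding append_Nil by blast
  interpret star_rep_frame n m \<pi> W
    by unfold_locales (use W W_max in simp_all)
  have "\<exists>Z. orthonormal m (frame @ Z) \<and> (\<forall>z\<in>set Z. ?P *\<^sub>v z = 0\<^sub>v m) \<and>
      (\<forall>y\<in>carrier_vec m. ?P *\<^sub>v y = 0\<^sub>v m \<longrightarrow> (\<forall>l\<in>set (frame @ Z). y \<bullet>c l = 0) \<longrightarrow> y = 0\<^sub>v m)"
    by (rule orthonormal_maximal_extension[OF frame_orthonormal]) (simp add: mult_mat_vec[of _ m m])
  then obtain Z where Z: "orthonormal m (frame @ Z)" "\<forall>z\<in>set Z. ?P *\<^sub>v z = 0\<^sub>v m"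
    and Z_max: "\<forall>y\<in>carrier_vec m. ?P *\<^sub>v y = 0\<^sub>v m \<longrightarrow> (\<forall>l\<in>set (frame @ Z). y \<bullet>c l = 0) \<longrightarrow> y = 0\<^sub>v m"
    by blast
  have len: "length (frame @ Z) = m" by (rule frame_extension_length[OF Z Z_max])
  let ?U = "mat_of_cols m (frame @ Z)"
  have "n * length W \<le> m" using len by (simp add: frame_def)
  moreover have U: "unitary_mat m ?U" by (rule unitary_mat_of_cols[OF Z(1) len])
  moreover have "\<pi> x = ?U * tensor_pad n (length W) m x * cadj ?U" if "x \<in> carrier_mat n n" for x
    using unitary_conj_eq[OF U hom_carrier[OF that] frame_conj_tensor_pad[OF Z(1) len _ that]] Z(2)
    by blast
  ultimately show ?thesis by blast
qed

section \<open>The multiplicities \<open>E\<^sub>\<phi>\<close>\<close>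

lemma bcarrier_length: "xs \<in> bcarrier ls \<Longrightarrow> length xs = length ls"
  by (simp add: bcarrier_def)

lemma bcarrier_nth: "xs \<in> bcarrier ls \<Longrightarrow> k < length ls \<Longrightarrow> xs ! k \<in> carrier_mat (ls ! k) (ls ! k)"
  by (simp add: bcarrier_def)

lemma bzero_length [simp]: "length (bzero ls) = length ls"
  by (simp add: bzero_def)

lemma bzero_nth: "k < length ls \<Longrightarrow> bzero ls ! k = 0\<^sub>m (ls ! k) (ls ! k)"
  by (simp add: bzero_def)

lemma binc_length [simp]: "length (binc ls j x) = length ls"
  by (simp add: binc_def)

lemma binc_nth: "k < length ls \<Longrightarrow> binc ls j x ! k = (if k = j then x else 0\<^sub>m (ls ! k) (ls ! k))"
  by (simp add: binc_def)

lemma binc_carrier: "j < length ls \<Longrightarrow> x \<in> carrier_mat (ls ! j) (ls ! j) \<Longrightarrow> binc ls j x \<in> bcarrier ls"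
  by (auto simp: bcarrier_def binc_nth)

lemma binc_add:
  "j < length ls \<Longrightarrow> x \<in> carrier_mat (ls ! j) (ls ! j) \<Longrightarrow> y \<in> carrier_mat (ls ! j) (ls ! j) \<Longrightarrow>
    badd (binc ls j x) (binc ls j y) = binc ls j (x + y)"
  by (rule nth_equalityI) (auto simp: badd_def binc_nth)

lemma binc_smult: "bsmult c (binc ls j x) = binc ls j (c \<cdot>\<^sub>m x)"
  by (rule nth_equalityI) (auto simp: bsmult_def binc_nth)

lemma binc_mult:
  "j < length ls \<Longrightarrow> x \<in> carrier_mat (ls ! j) (ls ! j) \<Longrightarrow> y \<in> carrier_mat (ls ! j) (ls ! j) \<Longrightarrow>
    bmult (binc ls j x) (binc ls j y) = binc ls j (x * y)"
  by (rule nth_equalityI) (auto simp: bmult_def binc_nth)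

lemma binc_adj: "badj (binc ls j x) = binc ls j (cadj x)"
  by (rule nth_equalityI) (auto simp: badj_def binc_nth)

lemma binc_eq_bzero_iff: "j < length ls \<Longrightarrow> binc ls j x = bzero ls \<longleftrightarrow> x = 0\<^sub>m (ls ! j) (ls ! j)"
  by (auto simp: list_eq_iff_nth_eq binc_nth bzero_nth)

lemma eq_binc_if_other_zero:
  assumes "q \<in> bcarrier ls" "j < length ls" "\<And>k. k < length ls \<Longrightarrow> k \<noteq> j \<Longrightarrow> q ! k = 0\<^sub>m (ls ! k) (ls ! k)"
  shows "q = binc ls j (q ! j)"
  using assms by (auto simp: list_eq_iff_nth_eq binc_nth bcarrier_length)

lemma is_proj_nth:
  assumes "is_proj ls q" "k < length ls"
  shows "q ! k \<in> carrier_mat (ls ! k) (ls ! k)" "q ! k * q ! k = q ! k" "cadj (q ! k) = q ! k"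
proof -
  have q: "q \<in> bcarrier ls" "bmult q q = q" "badj q = q" using assms(1) unfolding is_proj_def by auto
  show "q ! k \<in> carrier_mat (ls ! k) (ls ! k)" by (rule bcarrier_nth[OF q(1) assms(2)])
  show "q ! k * q ! k = q ! k" using arg_cong[OF q(2), of "\<lambda>l. l ! k"] assms(2) q(1)
    by (simp add: bmult_def bcarrier_length)
  show "cadj (q ! k) = q ! k" using arg_cong[OF q(3), of "\<lambda>l. l ! k"] assms(2) q(1)
    by (simp add: badj_def bcarrier_length)
qed

lemma is_proj_binc:
  assumes "j < length ls" "x \<in> carrier_mat (ls ! j) (ls ! j)" "x * x = x" "cadj x = x"
  shows "is_proj ls (binc ls j x)"
  using assms by (simp add: is_proj_def binc_carrier binc_mult binc_adj)

lemma star_rep_component: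
  assumes H: "star_hom ns ms \<phi>" and i: "i < length ns" and j: "j < length ms"
  shows "star_rep (ns ! i) (ms ! j) (\<lambda>x. \<phi> (binc ns i x) ! j)"
proof -
  have c: "\<phi> (binc ns i x) \<in> bcarrier ms" if "x \<in> carrier_mat (ns ! i) (ns ! i)" for x
    using H binc_carrier[OF i that] unfolding star_hom_def by blast
  have len: "length (\<phi> (binc ns i x)) = length ms" if "x \<in> carrier_mat (ns ! i) (ns ! i)" for x
    using bcarrier_length[OF c[OF that]] .
  have hom: "\<phi> (binc ns i x) ! j \<in> carrier_mat (ms ! j) (ms ! j)"
      "\<phi> (binc ns i (cadj x)) ! j = cadj (\<phi> (binc ns i x) ! j)"
      "\<phi> (binc ns i (c \<cdot>\<^sub>m x)) ! j = c \<cdot>\<^sub>m \<phi> (binc ns i x) ! j"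
    if x: "x \<in> carrier_mat (ns ! i) (ns ! i)" for x c
    using bcarrier_nth[OF c[OF x] j] H binc_carrier[OF i x] len[OF x] j
    by (auto simp: star_hom_def badj_def bsmult_def simp flip: binc_adj binc_smult)
  have hom2: "\<phi> (binc ns i (x + y)) ! j = \<phi> (binc ns i x) ! j + \<phi> (binc ns i y) ! j"
      "\<phi> (binc ns i (x * y)) ! j = \<phi> (binc ns i x) ! j * \<phi> (binc ns i y) ! j"
    if x: "x \<in> carrier_mat (ns ! i) (ns ! i)" and y: "y \<in> carrier_mat (ns ! i) (ns ! i)" for x y
    using H binc_carrier[OF i x] binc_carrier[OF i y] len[OF x] len[OF y] j
    by (auto simp: star_hom_def badd_def bmult_def simp flip: binc_add[OF i x y] binc_mult[OF i x y])
  show ?thesis by unfold_locales (simp_all add: hom hom2)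
qed

definition mtrace :: "complex mat \<Rightarrow> complex" where
  "mtrace A = (\<Sum>i<dim_row A. A $$ (i,i))"

lemma mtrace_mult_comm:
  assumes A: "A \<in> carrier_mat m k" and B: "B \<in> carrier_mat k m"
  shows "mtrace (A * B) = mtrace (B * A)"
proof -
  have "mtrace (A * B) = (\<Sum>i<m. \<Sum>j<k. A $$ (i,j) * B $$ (j,i))"
    unfolding mtrace_def using A B by (auto simp: scalar_prod_def lessThan_atLeast0 intro!: sum.cong)
  also have "\<dots> = (\<Sum>j<k. \<Sum>i<m. B $$ (j,i) * A $$ (i,j))"
    by (subst sum.swap) (simp add: mult.commute)
  also have "\<dots> = mtrace (B * A)"
    unfolding mtrace_def using A B by (auto simp: scalar_prod_def lessThan_atLeast0 intro!: sum.cong)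
  finally show ?thesis .
qed

lemma mtrace_unitary_conj:
  assumes U: "unitary_mat m U" and T: "T \<in> carrier_mat m m"
  shows "mtrace (U * T * cadj U) = mtrace T"
proof -
  have Uc: "U \<in> carrier_mat m m" and UU: "cadj U * U = 1\<^sub>m m" using U unfolding unitary_mat_def by auto
  have "mtrace (U * T * cadj U) = mtrace (cadj U * (U * T))"
    by (rule mtrace_mult_comm[of _ m m]) (use Uc T in auto)
  also have "cadj U * (U * T) = (cadj U * U) * T" using Uc T by (simp add: assoc_mult_mat[of _ m m _ m _ m])
  finally show ?thesis using UU T by simp
qed

lemma mtrace_tensor_pad_one:
  assumes "n * E \<le> m"
  shows "mtrace (tensor_pad n E m (1\<^sub>m n)) = of_nat (n * E)"
proof -
  have "mtrace (tensor_pad n E m (1\<^sub>m n)) = (\<Sum>r\<in>{..<m} \<inter> {..<n * E}. 1)"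
    unfolding mtrace_def tensor_pad_def sum.inter_restrict[OF finite_lessThan]
    by (rule sum.cong) (auto simp: less_mult_imp_div_less)
  also have "{..<m} \<inter> {..<n * E} = {..<n * E}" using assms by auto
  finally show ?thesis by simp
qed

lemma tensor_pad_multiplicity_unique:
  assumes n: "0 < n" and E: "n * E \<le> m" "n * E' \<le> m" and U: "unitary_mat m U" "unitary_mat m U'"
    and eq: "U * tensor_pad n E m (1\<^sub>m n) * cadj U = U' * tensor_pad n E' m (1\<^sub>m n) * cadj U'"
  shows "E = E'"
proof -
  have "of_nat (n * E) = (of_nat (n * E') :: complex)"
    using arg_cong[OF eq, of mtrace] mtrace_unitary_conj[OF U(1)] mtrace_unitary_conj[OF U(2)]
      mtrace_tensor_pad_one[OF E(1)] mtrace_tensor_pad_one[OF E(2)]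
    by (simp add: tensor_pad_def)
  then show ?thesis using n by simp
qed

lemma Emult_spec:
  assumes H: "star_hom ns ms \<phi>" and i: "i < length ns" and j: "j < length ms" and n: "0 < ns ! i"
  shows "ns ! i * Emult ns ms \<phi> i j \<le> ms ! j \<and> (\<exists>U. unitary_mat (ms ! j) U \<and>
    (\<forall>x\<in>carrier_mat (ns ! i) (ns ! i).
      \<phi> (binc ns i x) ! j = U * tensor_pad (ns ! i) (Emult ns ms \<phi> i j) (ms ! j) x * cadj U))"
proof -
  define P where "P E \<longleftrightarrow> ns ! i * E \<le> ms ! j \<and> (\<exists>U. unitary_mat (ms ! j) U \<and>
    (\<forall>x\<in>carrier_mat (ns ! i) (ns ! i). \<phi> (binc ns i x) ! j = U * tensor_pad (ns ! i) E (ms ! j) x * cadj U))"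
    for E
  interpret star_rep "ns ! i" "ms ! j" "\<lambda>x. \<phi> (binc ns i x) ! j"
    by (rule star_rep_component[OF H i j])
  have "\<exists>E. P E" using tensor_pad_form[OF n] unfolding P_def by blast
  moreover have "E1 = E2" if E1: "P E1" and E2: "P E2" for E1 E2
  proof -
    obtain U1 where U1: "ns ! i * E1 \<le> ms ! j" "unitary_mat (ms ! j) U1"
      "\<forall>x\<in>carrier_mat (ns ! i) (ns ! i). \<phi> (binc ns i x) ! j = U1 * tensor_pad (ns ! i) E1 (ms ! j) x * cadj U1"
      using E1 unfolding P_def by blast
    obtain U2 where U2: "ns ! i * E2 \<le> ms ! j" "unitary_mat (ms ! j) U2"
      "\<forall>x\<in>carrier_mat (ns ! i) (ns ! i). \<phi> (binc ns i x) ! j = U2 * tensor_pad (ns ! i) E2 (ms ! j) x * cadj U2"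
      using E2 unfolding P_def by blast
    show ?thesis
      using tensor_pad_multiplicity_unique[OF n U1(1) U2(1) U1(2) U2(2)]
        U1(3)[rule_format, OF one_carrier_mat] U2(3)[rule_format, OF one_carrier_mat] by simp
  qed
  ultimately have "P (THE E. P E)" by (metis theI)
  then show ?thesis unfolding Emult_def P_def .
qed

section \<open>Minimal projections\<close>

definition outer_mat :: "complex vec \<Rightarrow> complex mat" where
  "outer_mat v = mat (dim_vec v) (dim_vec v) (\<lambda>(a,b). v $ a * cnj (v $ b))"

lemma outer_mat_dims [simp]: "dim_row (outer_mat v) = dim_vec v" "dim_col (outer_mat v) = dim_vec v"
  by (simp_all add: outer_mat_def)

lemma outer_mat_carrier [simp]: "v \<in> carrier_vec d \<Longrightarrow> outer_mat v \<in> carrier_mat d d"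
  by (simp add: outer_mat_def)

lemma cadj_outer_mat: "cadj (outer_mat v) = outer_mat v"
  by (auto simp: cadj_def outer_mat_def intro!: eq_matI)

lemma outer_mat_mult_vec:
  assumes v: "v \<in> carrier_vec d" and w: "w \<in> carrier_vec d"
  shows "outer_mat v *\<^sub>v w = (w \<bullet>c v) \<cdot>\<^sub>v v"
  using v w by (auto simp: outer_mat_def scalar_prod_def sum_distrib_left ac_simps intro!: eq_vecI sum.cong)

lemma outer_mat_idem:
  assumes v: "v \<in> carrier_vec d" and unit: "v \<bullet>c v = 1"
  shows "outer_mat v * outer_mat v = outer_mat v"
proof (rule eq_matI)
  fix a b assume "a < dim_row (outer_mat v)" "b < dim_col (outer_mat v)"
  then have ab: "a < d" "b < d" using v by auto
  have "(outer_mat v * outer_mat v) $$ (a,b) = v $ a * cnj (v $ b) * (\<Sum>c<d. v $ c * cnj (v $ c))"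
    using ab v by (auto simp: outer_mat_def scalar_prod_def lessThan_atLeast0 sum_distrib_left ac_simps
        intro!: sum.cong)
  also have "(\<Sum>c<d. v $ c * cnj (v $ c)) = 1" using unit v by (simp add: cscalar_prod_sum)
  finally show "(outer_mat v * outer_mat v) $$ (a,b) = outer_mat v $$ (a,b)" using ab v by (simp add: outer_mat_def)
qed (use v in auto)

lemma outer_mat_nonzero:
  assumes v: "v \<in> carrier_vec d" and unit: "v \<bullet>c v = 1"
  shows "outer_mat v \<noteq> 0\<^sub>m d d"
proof
  assume zero: "outer_mat v = 0\<^sub>m d d"
  have "v $ a = 0" if "a < d" for a
  proof -
    have "outer_mat v $$ (a,a) = 0" using zero that by simp
    then show ?thesis using that v by (simp add: outer_mat_def)
  qed
  then have "v = 0\<^sub>v d" using v by (intro eq_vecI) auto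
  then show False using unit by simp
qed

lemma outer_mat_mult_proj:
  assumes Q: "Q \<in> carrier_mat d d" "cadj Q = Q" and v: "v \<in> carrier_vec d" "Q *\<^sub>v v = v"
  shows "outer_mat v * Q = outer_mat v"
proof (rule eq_matI)
  fix a b assume "a < dim_row (outer_mat v)" "b < dim_col (outer_mat v)"
  then have ab: "a < d" "b < d" using v by auto
  have "(outer_mat v * Q) $$ (a,b) = v $ a * cnj (\<Sum>k<d. Q $$ (b,k) * v $ k)"
  proof -
    have "Q $$ (k,b) = cnj (Q $$ (b,k))" if "k < d" for k
      using arg_cong[OF Q(2), of "\<lambda>M. M $$ (k,b)"] that ab Q(1) by simp
    then show ?thesis
      using ab v Q(1) by (auto simp: outer_mat_def scalar_prod_def lessThan_atLeast0 sum_distrib_left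
          ac_simps intro!: sum.cong)
  qed
  also have "(\<Sum>k<d. Q $$ (b,k) * v $ k) = v $ b"
    using index_mult_mat_vec_sum[OF Q(1) v(1) ab(2)] v(2) by simp
  finally show "(outer_mat v * Q) $$ (a,b) = outer_mat v $$ (a,b)" using ab v by (simp add: outer_mat_def)
qed (use v Q in auto)

lemma proj_fixed_unit_vector:
  fixes Q :: "complex mat"
  assumes Q: "Q \<in> carrier_mat d d" "Q * Q = Q" "Q \<noteq> 0\<^sub>m d d"
  obtains v where "v \<in> carrier_vec d" "v \<bullet>c v = 1" "Q *\<^sub>v v = v"
proof -
  have "\<exists>r s. r < d \<and> s < d \<and> Q $$ (r,s) \<noteq> 0"
  proof (rule ccontr)
    assume "\<not> ?thesis"
    then have "Q = 0\<^sub>m d d" using Q(1) by (intro eq_matI) auto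
    with Q(3) show False by simp
  qed
  then obtain r s where rs: "r < d" "s < d" "Q $$ (r,s) \<noteq> 0" by blast
  let ?y = "col Q s"
  have y: "?y \<in> carrier_vec d" "?y \<noteq> 0\<^sub>v d" "Q *\<^sub>v ?y = ?y"
    using Q rs by (auto simp: col_mult2[symmetric] dest: arg_cong[of _ _ "\<lambda>v. v $ r"])
  obtain c where c: "(c \<cdot>\<^sub>v ?y) \<bullet>c (c \<cdot>\<^sub>v ?y) = 1"
    using exists_normalizing_scalar[OF y(1,2)] by blast
  show ?thesis
  proof (rule that)
    show "c \<cdot>\<^sub>v ?y \<in> carrier_vec d" using y(1) by simp
    show "Q *\<^sub>v (c \<cdot>\<^sub>v ?y) = c \<cdot>\<^sub>v ?y" using mult_mat_vec[OF Q(1) y(1)] y(3) by simp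
  qed (rule c)
qed

lemma proj_below_matrix_unit:
  assumes Q: "Q \<in> carrier_mat N N" "Q * Q = Q" "cadj Q = Q" and pos: "0 < N"
    and Qe: "Q * matrix_unit N 0 0 = Q"
  shows "Q = 0\<^sub>m N N \<or> Q = matrix_unit N 0 0"
proof -
  let ?e = "matrix_unit N 0 0"
  have "?e * Q = cadj (Q * ?e)" using cadj_mult[OF Q(1) matrix_unit_carrier[of N 0 0]] Q(3) by simp
  also have "\<dots> = Q" using Qe Q(3) by simp
  finally have "?e * Q = Q" .
  then have "Q = ?e * Q * ?e" using Qe Q(1) by (simp add: assoc_mult_mat[of _ N N _ N _ N])
  also have "\<dots> = Q $$ (0,0) \<cdot>\<^sub>m ?e" by (rule matrix_unit_sandwich[OF Q(1) pos pos])
  finally have Q0: "Q = Q $$ (0,0) \<cdot>\<^sub>m ?e" .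
  have "?e * (Q $$ (0,0) \<cdot>\<^sub>m ?e) = Q $$ (0,0) \<cdot>\<^sub>m ?e"
    using mult_smult_distrib[of ?e N N ?e N] pos by (simp add: matrix_unit_mult)
  then have "(Q $$ (0,0) \<cdot>\<^sub>m ?e) * (Q $$ (0,0) \<cdot>\<^sub>m ?e) = Q $$ (0,0) \<cdot>\<^sub>m (Q $$ (0,0) \<cdot>\<^sub>m ?e)"
    using mult_smult_assoc_mat[of ?e N N "Q $$ (0,0) \<cdot>\<^sub>m ?e" N] by simp
  also have "\<dots> = (Q $$ (0,0) * Q $$ (0,0)) \<cdot>\<^sub>m ?e"
    by (auto intro!: eq_matI)
  finally have "(Q $$ (0,0) \<cdot>\<^sub>m ?e) * (Q $$ (0,0) \<cdot>\<^sub>m ?e) = (Q $$ (0,0) * Q $$ (0,0)) \<cdot>\<^sub>m ?e" .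
  then have "(Q $$ (0,0) * Q $$ (0,0)) \<cdot>\<^sub>m ?e = Q $$ (0,0) \<cdot>\<^sub>m ?e" using Q(2) Q0 by simp
  then have "((Q $$ (0,0) * Q $$ (0,0)) \<cdot>\<^sub>m ?e) $$ (0,0) = (Q $$ (0,0) \<cdot>\<^sub>m ?e) $$ (0,0)"
    by (rule arg_cong)
  then have "Q $$ (0,0) * Q $$ (0,0) = Q $$ (0,0)" using pos by (simp add: matrix_unit_def)
  then show ?thesis
    using Q0 by (auto intro!: eq_matI simp: matrix_unit_def)
qed

lemma min_proj_binc_matrix_unit:
  assumes j: "j < length ls" and pos: "0 < ls ! j"
  shows "min_proj ls (binc ls j (matrix_unit (ls ! j) 0 0))"
proof -
  let ?N = "ls ! j" and ?e = "matrix_unit (ls ! j) 0 0"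
  let ?p = "binc ls j ?e"
  have proj: "is_proj ls ?p"
    using pos by (intro is_proj_binc[OF j]) (simp_all add: matrix_unit_mult)
  have "?e $$ (0,0) = 1" using pos by (simp add: matrix_unit_def)
  then have nz: "?p \<noteq> bzero ls" using pos j by (auto simp: binc_eq_bzero_iff)
  have "q = bzero ls \<or> q = ?p" if q: "is_proj ls q" "bmult q ?p = q" for q
  proof -
    have qc: "q \<in> bcarrier ls" using q(1) unfolding is_proj_def by simp
    let ?Q = "q ! j"
    note Q = is_proj_nth[OF q(1) j]
    have other: "q ! k = 0\<^sub>m (ls ! k) (ls ! k)" if "k < length ls" "k \<noteq> j" for k
      using arg_cong[OF q(2), of "\<lambda>l. l ! k"] that bcarrier_nth[OF qc that(1)]
      by (simp add: bmult_def binc_nth bcarrier_length[OF qc])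
    have Qe: "?Q * ?e = ?Q" using arg_cong[OF q(2), of "\<lambda>l. l ! j"] j
      by (simp add: bmult_def binc_nth bcarrier_length[OF qc])
    have "?Q = 0\<^sub>m ?N ?N \<or> ?Q = ?e" by (rule proj_below_matrix_unit[OF Q pos Qe])
    then show ?thesis
      using eq_binc_if_other_zero[OF qc j other] binc_eq_bzero_iff[OF j] by auto
  qed
  then show ?thesis unfolding min_proj_def using proj nz by blast
qed

lemma min_proj_eq_binc_outer_mat:
  assumes "min_proj ls q"
  obtains j v where "j < length ls" "v \<in> carrier_vec (ls ! j)" "v \<bullet>c v = 1" "q = binc ls j (outer_mat v)"
proof -
  have proj: "is_proj ls q" and nz: "q \<noteq> bzero ls"
    and minimal: "\<And>p. is_proj ls p \<Longrightarrow> bmult p q = p \<Longrightarrow> p = bzero ls \<or> p = q"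
    using assms unfolding min_proj_def by auto
  have qc: "q \<in> bcarrier ls" using proj unfolding is_proj_def by simp
  obtain j where j: "j < length ls" and Qnz: "q ! j \<noteq> 0\<^sub>m (ls ! j) (ls ! j)"
    using nz qc by (auto simp: list_eq_iff_nth_eq bzero_nth bcarrier_length)
  note Q = is_proj_nth[OF proj j]
  obtain v where v: "v \<in> carrier_vec (ls ! j)" "v \<bullet>c v = 1" "q ! j *\<^sub>v v = v"
    using proj_fixed_unit_vector[OF Q(1,2) Qnz] by blast
  let ?p = "binc ls j (outer_mat v)"
  have "is_proj ls ?p" using v by (intro is_proj_binc[OF j]) (simp_all add: outer_mat_idem cadj_outer_mat)
  moreover have "bmult ?p q = ?p"
  proof (rule nth_equalityI)
    show "length (bmult ?p q) = length ?p" using qc by (simp add: bmult_def bcarrier_length)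
    fix k assume "k < length (bmult ?p q)"
    then have k: "k < length ls" using qc by (simp add: bmult_def bcarrier_length)
    then show "bmult ?p q ! k = ?p ! k"
      using qc bcarrier_nth[OF qc k] outer_mat_mult_proj[OF Q(1,3) v(1,3)]
      by (simp add: bmult_def binc_nth bcarrier_length)
  qed
  moreover have "?p \<noteq> bzero ls" using outer_mat_nonzero[OF v(1,2)] by (simp add: binc_eq_bzero_iff[OF j])
  ultimately have "?p = q" using minimal by blast
  with that j v show ?thesis by blast
qed

lemma bnorm_nonneg: "0 \<le> bnorm xs"
  unfolding bnorm_def by (rule Max_ge) auto

lemma opnorm_nth_le_bnorm:
  assumes "length xs = length ys" "k < length xs"
  shows "opnorm (xs ! k - ys ! k) \<le> bnorm (bsub xs ys)"
proof -
  have "bsub xs ys ! k = xs ! k - ys ! k" "k < length (bsub xs ys)"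
    using assms by (simp_all add: bsub_def)
  then have "xs ! k - ys ! k \<in> set (bsub xs ys)" by (metis nth_mem)
  then show ?thesis unfolding bnorm_def by (intro Max_ge) auto
qed

lemma bnorm_bsub_self:
  assumes "xs \<in> bcarrier ls"
  shows "bnorm (bsub xs xs) = 0"
proof -
  have "opnorm (xs ! k - xs ! k) = 0" if "k < length xs" for k
  proof -
    have "xs ! k \<in> carrier_mat (ls ! k) (ls ! k)"
      using that bcarrier_nth[OF assms] bcarrier_length[OF assms] by simp
    then show ?thesis using opnorm_zero by simp
  qed
  then have "opnorm ` set (bsub xs xs) \<subseteq> {0}"
    by (auto simp: bsub_def in_set_conv_nth)
  then have e: "insert 0 (opnorm ` set (bsub xs xs)) = {0}" by auto
  show ?thesis unfolding bnorm_def e by simp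
qed

lemma rho_min_min_proj:
  assumes "min_proj ls p"
  shows "rho_min ls p = 0"
proof -
  have "p \<in> bcarrier ls" using assms unfolding min_proj_def is_proj_def by simp
  then show ?thesis unfolding rho_min_def
    by (intro cInf_eq_minimum) (use assms bnorm_bsub_self bnorm_nonneg in auto)
qed

lemma exists_min_proj_near:
  assumes "rho_min ls x = 0" and "min_proj ls q0"
  obtains q where "min_proj ls q" "bnorm (bsub x q) < 1"
proof -
  let ?S = "{bnorm (bsub x p) | p. min_proj ls p}"
  have ne: "?S \<noteq> {}" using assms(2) by auto
  have bdd: "bdd_below ?S" using bnorm_nonneg by (auto simp: bdd_below_def)
  have "Inf ?S < 1" using assms(1) unfolding rho_min_def by simp
  then obtain s where "s \<in> ?S" "s < 1" using cInf_less_iff[OF ne bdd] by blast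
  with that show ?thesis by blast
qed

section \<open>\<open>L\<^sub>m\<^sub>i\<^sub>n\<close>-embeddings have multiplicity one\<close>

lemma tensor_pad_unit_mult_unit_vec:
  assumes n: "0 < n" and nE: "n * E \<le> m" and r: "r < E"
  shows "tensor_pad n E m (matrix_unit n 0 0) *\<^sub>v unit_vec m r = unit_vec m r"
proof -
  let ?T = "tensor_pad n E m (matrix_unit n 0 0)"
  have "E \<le> n * E" using n by simp
  then have Em: "E \<le> m" and rnE: "r < n * E" using nE r by linarith+
  have rE: "r div E = 0" "r mod E = r" using r by auto
  then have iff: "s div E = 0 \<and> s mod E = r \<longleftrightarrow> s = r" for s by (metis div_mult_mod_eq add_0 mult_zero_left)
  show ?thesis
  proof (rule eq_vecI)
    fix s assume "s < dim_vec (unit_vec m r)"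
    then have s: "s < m" by simp
    have "(?T *\<^sub>v unit_vec m r) $ s = ?T $$ (s,r)"
      using s r Em by (simp add: tensor_pad_def)
    also have "\<dots> = (if s < n * E \<and> s div E = 0 \<and> s mod E = r then 1 else 0)"
      using s r Em rE rnE n by (auto simp: tensor_pad_def matrix_unit_def less_mult_imp_div_less)
    also have "\<dots> = unit_vec m r $ s"
      using iff rnE s by (auto simp: unit_vec_def)
    finally show "(?T *\<^sub>v unit_vec m r) $ s = unit_vec m r $ s" .
  qed (simp add: tensor_pad_def)
qed

lemma tensor_pad_unit_fixed_vectors:
  assumes n: "0 < n" and nE: "n * E \<le> m" and U: "unitary_mat m U"
  defines "P \<equiv> U * tensor_pad n E m (matrix_unit n 0 0) * cadj U"
  shows "E = 0 \<Longrightarrow> P = 0\<^sub>m m m"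
    and "r < E \<Longrightarrow> P *\<^sub>v (U *\<^sub>v unit_vec m r) = U *\<^sub>v unit_vec m r"
    and "r < E \<Longrightarrow> s < E \<Longrightarrow> (U *\<^sub>v unit_vec m r) \<bullet>c (U *\<^sub>v unit_vec m s) = (if r = s then 1 else 0)"
proof -
  let ?T = "tensor_pad n E m (matrix_unit n 0 0)"
  have Uc: "U \<in> carrier_mat m m" and UU: "cadj U * U = 1\<^sub>m m" using U unfolding unitary_mat_def by auto
  have "E \<le> n * E" using n by simp
  then have Em: "E \<le> m" using nE by linarith
  have cancel: "cadj U *\<^sub>v (U *\<^sub>v unit_vec m r) = unit_vec m r" for r
    using assoc_mult_mat_vec[OF cadj_carrier[OF Uc] Uc unit_vec_carrier, of r] UU by simp
  show "P = 0\<^sub>m m m" if "E = 0"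
  proof -
    have "?T = 0\<^sub>m m m" using that by (auto simp: tensor_pad_def intro!: eq_matI)
    then show ?thesis unfolding P_def using Uc by simp
  qed
  show "P *\<^sub>v (U *\<^sub>v unit_vec m r) = U *\<^sub>v unit_vec m r" if r: "r < E"
  proof -
    have "?T *\<^sub>v unit_vec m r = unit_vec m r" by (rule tensor_pad_unit_mult_unit_vec[OF n nE r])
    moreover have "P *\<^sub>v (U *\<^sub>v unit_vec m r) = U *\<^sub>v (?T *\<^sub>v (cadj U *\<^sub>v (U *\<^sub>v unit_vec m r)))"
      unfolding P_def by (rule assoc_mult3_mat_vec[OF Uc tensor_pad_carrier cadj_carrier[OF Uc]]) (use Uc in simp)
    ultimately show ?thesis using cancel by simp
  qed
  show "(U *\<^sub>v unit_vec m r) \<bullet>c (U *\<^sub>v unit_vec m s) = (if r = s then 1 else 0)" if "r < E" "s < E"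
  proof -
    have "(U *\<^sub>v unit_vec m r) \<bullet>c (U *\<^sub>v unit_vec m s) = unit_vec m r \<bullet>c unit_vec m s"
      using cscalar_prod_adjoint[OF Uc unit_vec_carrier mult_mat_vec_carrier[OF Uc unit_vec_carrier]] cancel
      by simp
    then show ?thesis using that Em by simp
  qed
qed

lemma exists_fixed_unit_orthogonal:
  fixes v :: "complex vec"
  assumes P: "P \<in> carrier_mat m m" and v: "v \<in> carrier_vec m"
    and u: "u0 \<in> carrier_vec m" "u1 \<in> carrier_vec m" "u0 \<bullet>c u0 = 1" "u1 \<bullet>c u1 = 1" "u0 \<bullet>c u1 = 0"
    and fixed: "P *\<^sub>v u0 = u0" "P *\<^sub>v u1 = u1"
  shows "\<exists>w\<in>carrier_vec m. w \<bullet>c w = 1 \<and> P *\<^sub>v w = w \<and> w \<bullet>c v = 0"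
proof (cases "u0 \<bullet>c v = 0")
  case True
  with u fixed show ?thesis by blast
next
  case False
  let ?a = "u1 \<bullet>c v" and ?b = "u0 \<bullet>c v"
  let ?w = "?a \<cdot>\<^sub>v u0 - ?b \<cdot>\<^sub>v u1"
  have w: "?w \<in> carrier_vec m" using u by simp
  have "?w \<bullet>c v = ?a * ?b - ?b * ?a"
    using cscalar_prod_minus_left[of "?a \<cdot>\<^sub>v u0" m "?b \<cdot>\<^sub>v u1" v] u v by simp
  also have "?a * ?b - ?b * ?a = 0" by simp
  finally have wv: "?w \<bullet>c v = 0" .
  have "P *\<^sub>v ?w = ?a \<cdot>\<^sub>v (P *\<^sub>v u0) - ?b \<cdot>\<^sub>v (P *\<^sub>v u1)"
    using mult_minus_distrib_mat_vec[OF P, of "?a \<cdot>\<^sub>v u0" "?b \<cdot>\<^sub>v u1"] mult_mat_vec[OF P u(1)]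
      mult_mat_vec[OF P u(2)] u by simp
  then have Pw: "P *\<^sub>v ?w = ?w" using fixed by simp
  have "?w \<bullet>c u1 = - ?b"
    using cscalar_prod_minus_left[of "?a \<cdot>\<^sub>v u0" m "?b \<cdot>\<^sub>v u1" u1] u by simp
  then have "?w \<noteq> 0\<^sub>v m" using u(2) False by auto
  then obtain c where c: "(c \<cdot>\<^sub>v ?w) \<bullet>c (c \<cdot>\<^sub>v ?w) = 1" using exists_normalizing_scalar[OF w] by blast
  have "P *\<^sub>v (c \<cdot>\<^sub>v ?w) = c \<cdot>\<^sub>v ?w" using mult_mat_vec[OF P w] Pw by simp
  moreover have "(c \<cdot>\<^sub>v ?w) \<bullet>c v = 0" using wv w v by simp
  ultimately show ?thesis using c w by (intro bexI[of _ "c \<cdot>\<^sub>v ?w"]) auto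
qed

lemma multiplicity_eq_0_if_near_zero:
  assumes n: "0 < n" and nE: "n * E \<le> m" and U: "unitary_mat m U"
    and near: "opnorm (U * tensor_pad n E m (matrix_unit n 0 0) * cadj U - 0\<^sub>m m m) < 1"
  shows "E = 0"
proof (rule ccontr)
  let ?P = "U * tensor_pad n E m (matrix_unit n 0 0) * cadj U" and ?w = "U *\<^sub>v unit_vec m 0"
  note fixed = tensor_pad_unit_fixed_vectors[OF n nE U]
  assume "E \<noteq> 0"
  then have E: "0 < E" by simp
  have Uc: "U \<in> carrier_mat m m" using U unfolding unitary_mat_def by simp
  have w: "?w \<in> carrier_vec m" using Uc by simp
  have P: "?P \<in> carrier_mat m m"
    by (rule mult_carrier_mat[OF mult_carrier_mat[OF Uc tensor_pad_carrier] cadj_carrier[OF Uc]])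
  have "?P *\<^sub>v ?w - 0\<^sub>m m m *\<^sub>v ?w = ?w" using fixed(2)[OF E] w by simp
  then have "1 \<le> opnorm (?P - 0\<^sub>m m m)"
    using one_le_opnorm_diff[OF P zero_carrier_mat[of m m] w fixed(3)[OF E E, simplified]] by simp
  with near show False by simp
qed

lemma multiplicity_eq_1_if_near_rank_one:
  assumes n: "0 < n" and nE: "n * E \<le> m" and U: "unitary_mat m U"
    and v: "v \<in> carrier_vec m" "v \<bullet>c v = 1"
    and near: "opnorm (U * tensor_pad n E m (matrix_unit n 0 0) * cadj U - outer_mat v) < 1"
  shows "E = 1"
proof -
  let ?P = "U * tensor_pad n E m (matrix_unit n 0 0) * cadj U" and ?u = "\<lambda>r. U *\<^sub>v unit_vec m r"
  note fixed = tensor_pad_unit_fixed_vectors[OF n nE U]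
  have Uc: "U \<in> carrier_mat m m" using U unfolding unitary_mat_def by simp
  have P: "?P \<in> carrier_mat m m"
    by (rule mult_carrier_mat[OF mult_carrier_mat[OF Uc tensor_pad_carrier] cadj_carrier[OF Uc]])
  have u: "?u r \<in> carrier_vec m" for r using Uc by simp
  have ov: "outer_mat v \<in> carrier_mat m m" using v(1) by simp
  have "E \<noteq> 0"
  proof
    assume "E = 0"
    then have "?P *\<^sub>v v - outer_mat v *\<^sub>v v = - v"
      using fixed(1) v outer_mat_mult_vec[OF v(1) v(1)] by simp
    then have "1 \<le> opnorm (?P - outer_mat v)"
      using one_le_opnorm_diff[OF P ov v] by simp
    with near show False by simp
  qed
  moreover have "\<not> 2 \<le> E"
  proof
    assume "2 \<le> E"
    then have "0 < E" "Suc 0 < E" by auto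
    then have "\<exists>w\<in>carrier_vec m. w \<bullet>c w = 1 \<and> ?P *\<^sub>v w = w \<and> w \<bullet>c v = 0"
      using fixed(3)[of 0 0, simplified] fixed(3)[of 1 1, simplified] fixed(3)[of 0 1, simplified]
      by (intro exists_fixed_unit_orthogonal[OF P v(1) u[of 0] u[of "Suc 0"] _ _ _ fixed(2) fixed(2)])
    then obtain w where w: "w \<in> carrier_vec m" "w \<bullet>c w = 1" "?P *\<^sub>v w = w" "w \<bullet>c v = 0"
      by blast
    then have "?P *\<^sub>v w - outer_mat v *\<^sub>v w = w"
      using outer_mat_mult_vec[OF v(1) w(1)] zero_smult_vec[OF v(1)] by simp
    then have "1 \<le> opnorm (?P - outer_mat v)"
      using one_le_opnorm_diff[OF P ov w(1,2)] by simp
    with near show False by simp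
  qed
  ultimately show ?thesis by simp
qed

lemma Emult_near_min_proj:
  assumes H: "star_hom ns ms \<phi>" and i: "i < length ns" "0 < ns ! i" and j: "j < length ms"
    and j0: "j0 < length ms" and v: "v \<in> carrier_vec (ms ! j0)" "v \<bullet>c v = 1"
    and near: "bnorm (bsub (\<phi> (binc ns i (matrix_unit (ns ! i) 0 0))) (binc ms j0 (outer_mat v))) < 1"
  shows "Emult ns ms \<phi> i j = (if j = j0 then 1 else 0)"
proof -
  let ?p = "binc ns i (matrix_unit (ns ! i) 0 0)" and ?E = "Emult ns ms \<phi> i j"
  obtain U where E: "ns ! i * ?E \<le> ms ! j" and U: "unitary_mat (ms ! j) U"
    and rep: "\<forall>x\<in>carrier_mat (ns ! i) (ns ! i).
      \<phi> (binc ns i x) ! j = U * tensor_pad (ns ! i) ?E (ms ! j) x * cadj U"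
    using Emult_spec[OF H i(1) j i(2)] by blast
  have "\<phi> ?p \<in> bcarrier ms"
    using H binc_carrier[OF i(1) matrix_unit_carrier] unfolding star_hom_def by blast
  then have "opnorm (\<phi> ?p ! j - binc ms j0 (outer_mat v) ! j) < 1"
    using opnorm_nth_le_bnorm[of "\<phi> ?p" "binc ms j0 (outer_mat v)" j] near j by (simp add: bcarrier_length)
  then have near_j: "opnorm (U * tensor_pad (ns ! i) ?E (ms ! j) (matrix_unit (ns ! i) 0 0) * cadj U -
      binc ms j0 (outer_mat v) ! j) < 1"
    using rep by simp
  show ?thesis
  proof (cases "j = j0")
    case True
    then show ?thesis
      using multiplicity_eq_1_if_near_rank_one[OF i(2) E U _ v(2)] near_j v(1) j by (simp add: binc_nth)
  next
    case False
    then show ?thesis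
      using multiplicity_eq_0_if_near_zero[OF i(2) E U] near_j j by (simp add: binc_nth)
  qed
qed

lemma unital_inj_star_hom_codomain_nonempty:
  assumes "unital_inj_star_hom ns ms \<phi>" "i < length ns" "0 < ns ! i"
  shows "ms \<noteq> []"
proof
  assume ms: "ms = []"
  have hom: "star_hom ns ms \<phi>" "\<phi> (bone ns) = bone ms" "inj_on \<phi> (bcarrier ns)"
    using assms(1) unfolding unital_inj_star_hom_def by auto
  have b: "bone ns \<in> bcarrier ns" "bzero ns \<in> bcarrier ns"
    by (auto simp: bcarrier_def bone_def bzero_def)
  have "\<phi> (bzero ns) \<in> bcarrier []" using hom(1) b(2) ms unfolding star_hom_def by blast
  then have "\<phi> (bzero ns) = \<phi> (bone ns)" using hom(2) ms by (simp add: bcarrier_def bone_def)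
  then have "bzero ns = bone ns" using inj_onD[OF hom(3)] b by blast
  then have "bzero ns ! i $$ (0,0) = bone ns ! i $$ (0,0)" by simp
  then show False using assms(2,3) by (simp add: bone_def bzero_def)
qed

theorem lemma2p5:
  fixes ns ms :: "nat list" and \<phi> :: "complex mat list \<Rightarrow> complex mat list"
  assumes "\<forall>n\<in>set ns. 0 < n"
    and "\<forall>m\<in>set ms. 0 < m"
    and "unital_inj_star_hom ns ms \<phi>"
    and "Lmin_embedding ns ms \<phi>"
  shows "\<forall>i<length ns. mult ns ms \<phi> i = 1"
proof (intro allI impI)
  fix i assume i: "i < length ns"
  have n: "0 < ns ! i" using assms(1) i by simp
  have H: "star_hom ns ms \<phi>" using assms(3) unfolding unital_inj_star_hom_def by simp
  let ?p = "binc ns i (matrix_unit (ns ! i) 0 0)"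
  have "min_proj ns ?p" by (rule min_proj_binc_matrix_unit[OF i n])
  then have "rho_min ms (\<phi> ?p) = 0"
    using assms(4) rho_min_min_proj unfolding Lmin_embedding_def min_proj_def is_proj_def by simp
  moreover have "min_proj ms (binc ms 0 (matrix_unit (ms ! 0) 0 0))"
    using unital_inj_star_hom_codomain_nonempty[OF assms(3) i n] assms(2)
    by (intro min_proj_binc_matrix_unit) auto
  ultimately obtain q where q: "min_proj ms q" "bnorm (bsub (\<phi> ?p) q) < 1"
    by (rule exists_min_proj_near)
  obtain j0 v where j0: "j0 < length ms" "v \<in> carrier_vec (ms ! j0)" "v \<bullet>c v = 1"
    and q_eq: "q = binc ms j0 (outer_mat v)"
    using q(1) by (rule min_proj_eq_binc_outer_mat)
  have "mult ns ms \<phi> i = (\<Sum>j<length ms. if j = j0 then 1 else 0)"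
    unfolding mult_def using Emult_near_min_proj[OF H i n _ j0] q(2) q_eq by (intro sum.cong) auto
  also have "\<dots> = 1" using j0(1) by simp
  finally show "mult ns ms \<phi> i = 1" .
qed

end
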